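(* Let $\mathcal{X}=\{x_k\}_{k=1}^\infty$ be a family of vectors in a real or complex Hilbert space $\mathbb{H}$. The following are equivalent: (1) whenever $T,S$ are Hilbert–Schmidt, positive and self-adjoint operators on $\mathbb{H}$ with $\langle Tx_k,x_k\rangle=\langle Sx_k,x_k\rangle$ for all $k$, then $T=S$; (2) whenever $T,S$ are Hilbert–Schmidt self-adjoint operators on $\mathbb{H}$ with $\langle Tx_k,x_k\rangle=\langle Sx_k,x_k\rangle$ for all $k$, then $T=S$; (3) $\mathcal{X}$ is injective.
   Context: A family $\{x_k\}$ in a Hilbert space is called injective if whenever a Hilbert–Schmidt self-adjoint operator $T$ satisfies $\langle Tx_k,x_k\rangle=0$ for all $k$, then $T=0$. *)

theory Defs
  imports "HOL-Analysis.Analysis"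
begin

definition r_orthonormal_basis :: "'a::real_inner set \<Rightarrow> bool" where
  "r_orthonormal_basis B \<longleftrightarrow>
     (\<forall>b\<in>B. norm b = 1) \<and> (\<forall>b\<in>B. \<forall>c\<in>B. b \<noteq> c \<longrightarrow> b \<bullet> c = 0)
     \<and> closure (span B) = UNIV"

definition r_hilbert_schmidt :: "('a::real_inner \<Rightarrow> 'a) \<Rightarrow> bool" where
  "r_hilbert_schmidt T \<longleftrightarrow> bounded_linear T \<and>
     (\<exists>B. r_orthonormal_basis B \<and> (\<lambda>b. (norm (T b))^2) summable_on B)"

definition r_selfadjoint :: "('a::real_inner \<Rightarrow> 'a) \<Rightarrow> bool" where
  "r_selfadjoint T \<longleftrightarrow> bounded_linear T \<and> (\<forall>x y. T x \<bullet> y = x \<bullet> T y)"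

definition r_positive :: "('a::real_inner \<Rightarrow> 'a) \<Rightarrow> bool" where
  "r_positive T \<longleftrightarrow> (\<forall>x. 0 \<le> T x \<bullet> x)"

definition r_injective_family :: "(nat \<Rightarrow> 'a::real_inner) \<Rightarrow> bool" where
  "r_injective_family x \<longleftrightarrow>
     (\<forall>T. r_hilbert_schmidt T \<and> r_selfadjoint T \<and> (\<forall>k. T (x k) \<bullet> x k = 0)
          \<longrightarrow> T = (\<lambda>_. 0))"

section \<open>Complex Hilbert spaces: a Banach space 'a with complex scalar multiplication sc
  extending the real one and an inner product ip (linear in the first argument)
  inducing the norm\<close>

definition complex_hilbert :: "(complex \<Rightarrow> 'a::banach \<Rightarrow> 'a) \<Rightarrow> ('a \<Rightarrow> 'a \<Rightarrow> complex) \<Rightarrow> bool" where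
  "complex_hilbert sc ip \<longleftrightarrow>
     (\<forall>r x. sc (complex_of_real r) x = r *\<^sub>R x) \<and>
     (\<forall>a b x. sc (a * b) x = sc a (sc b x)) \<and>
     (\<forall>a x y. sc a (x + y) = sc a x + sc a y) \<and>
     (\<forall>a b x. sc (a + b) x = sc a x + sc b x) \<and>
     (\<forall>x y z. ip (x + y) z = ip x z + ip y z) \<and>
     (\<forall>a x y. ip (sc a x) y = a * ip x y) \<and>
     (\<forall>x y. ip y x = cnj (ip x y)) \<and>
     (\<forall>x. ip x x = complex_of_real ((norm x)^2))"

definition c_linear :: "(complex \<Rightarrow> 'a::real_normed_vector \<Rightarrow> 'a) \<Rightarrow> ('a \<Rightarrow> 'a) \<Rightarrow> bool" where
  "c_linear sc T \<longleftrightarrow> bounded_linear T \<and> (\<forall>a x. T (sc a x) = sc a (T x))"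

definition cspan :: "(complex \<Rightarrow> 'a::real_vector \<Rightarrow> 'a) \<Rightarrow> 'a set \<Rightarrow> 'a set" where
  "cspan sc B = {y. \<exists>F c. finite F \<and> F \<subseteq> B \<and> y = (\<Sum>b\<in>F. sc (c b) b)}"

definition c_orthonormal_basis ::
  "(complex \<Rightarrow> 'a::real_normed_vector \<Rightarrow> 'a) \<Rightarrow> ('a \<Rightarrow> 'a \<Rightarrow> complex) \<Rightarrow> 'a set \<Rightarrow> bool" where
  "c_orthonormal_basis sc ip B \<longleftrightarrow>
     (\<forall>b\<in>B. ip b b = 1) \<and> (\<forall>b\<in>B. \<forall>c\<in>B. b \<noteq> c \<longrightarrow> ip b c = 0)
     \<and> closure (cspan sc B) = UNIV"

definition c_hilbert_schmidt ::
  "(complex \<Rightarrow> 'a::real_normed_vector \<Rightarrow> 'a) \<Rightarrow> ('a \<Rightarrow> 'a \<Rightarrow> complex) \<Rightarrow> ('a \<Rightarrow> 'a) \<Rightarrow> bool" where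
  "c_hilbert_schmidt sc ip T \<longleftrightarrow> c_linear sc T \<and>
     (\<exists>B. c_orthonormal_basis sc ip B \<and> (\<lambda>b. (norm (T b))^2) summable_on B)"

definition c_selfadjoint ::
  "(complex \<Rightarrow> 'a::real_normed_vector \<Rightarrow> 'a) \<Rightarrow> ('a \<Rightarrow> 'a \<Rightarrow> complex) \<Rightarrow> ('a \<Rightarrow> 'a) \<Rightarrow> bool" where
  "c_selfadjoint sc ip T \<longleftrightarrow> c_linear sc T \<and> (\<forall>x y. ip (T x) y = ip x (T y))"

definition c_positive :: "('a \<Rightarrow> 'a \<Rightarrow> complex) \<Rightarrow> ('a \<Rightarrow> 'a) \<Rightarrow> bool" where
  "c_positive ip T \<longleftrightarrow> (\<forall>x. \<exists>r\<ge>0. ip (T x) x = complex_of_real r)"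

definition c_injective_family ::
  "(complex \<Rightarrow> 'a::real_normed_vector \<Rightarrow> 'a) \<Rightarrow> ('a \<Rightarrow> 'a \<Rightarrow> complex) \<Rightarrow> (nat \<Rightarrow> 'a) \<Rightarrow> bool" where
  "c_injective_family sc ip x \<longleftrightarrow>
     (\<forall>T. c_hilbert_schmidt sc ip T \<and> c_selfadjoint sc ip T \<and> (\<forall>k. ip (T (x k)) (x k) = 0)
          \<longrightarrow> T = (\<lambda>_. 0))"

end

theory Submission
  imports Defs
begin

text \<open>Differences of self-adjoint Hilbert--Schmidt operators are again such operators, which
  makes (2) and (3) equivalent. The substance is (1) \<open>\<Longrightarrow>\<close> (2): every self-adjoint
  Hilbert--Schmidt \<open>A\<close> is the difference of the positive operators \<open>(|A| + A)/2\<close> and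
  \<open>(|A| - A)/2\<close>, which are Hilbert--Schmidt because \<open>\<parallel>|A| x\<parallel> = \<parallel>A x\<parallel>\<close>, and positive because
  \<open>|\<langle>A x, x\<rangle>| \<le> \<langle>|A| x, x\<rangle>\<close>. The absolute value \<open>|A| = sqrt(A\<^sup>2)\<close> is obtained without spectral
  theory: for \<open>\<parallel>A\<parallel> \<le> K\<close> the operator \<open>Y = 1 - A\<^sup>2/K\<^sup>2\<close> is a positive contraction, the
  iterates \<open>Z\<^sub>n\<^sub>+\<^sub>1 = (Y + Z\<^sub>n\<^sup>2)/2\<close> converge strongly to some \<open>Z\<close> with \<open>(1 - Z)\<^sup>2 = 1 - Y\<close>, and
  \<open>|A| = K (1 - Z)\<close>.\<close>

lemma summable_on_power2_norm_mono:
  assumes "(\<lambda>b. (norm (A b))^2) summable_on B" "\<And>x. norm (P x) \<le> norm (A x)"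
  shows "(\<lambda>b. (norm (P b))^2) summable_on B"
proof (rule summable_on_comparison_test[OF assms(1)])
  fix b show "(norm (P b))^2 \<le> (norm (A b))^2" using assms(2)[of b] by (simp add: power_mono)
qed simp

lemma summable_on_power2_norm_diff:
  assumes T: "(\<lambda>b. (norm (T b))^2) summable_on B" and S: "(\<lambda>b. (norm (S b))^2) summable_on B"
  shows "(\<lambda>b. (norm (T b - S b))^2) summable_on B"
proof (rule summable_on_comparison_test)
  show "(\<lambda>b. 2 * (norm (T b))^2 + 2 * (norm (S b))^2) summable_on B"
    by (intro summable_on_add summable_on_cmult_right T S)
  fix b
  have "norm (T b - S b) \<le> norm (T b) + norm (S b)" by (rule norm_triangle_ineq4)
  then have "(norm (T b - S b))^2 \<le> (norm (T b) + norm (S b))^2" by (rule power_mono) auto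
  also have "\<dots> \<le> 2 * (norm (T b))^2 + 2 * (norm (S b))^2"
    using zero_le_power2[of "norm (T b) - norm (S b)"] unfolding power2_sum power2_diff by linarith
  finally show "(norm (T b - S b))^2 \<le> 2 * (norm (T b))^2 + 2 * (norm (S b))^2" .
qed simp

lemma has_sum_sum_finite:
  fixes f :: "'i \<Rightarrow> 'j \<Rightarrow> real"
  assumes "finite F" "\<And>b. b \<in> F \<Longrightarrow> (f b has_sum s b) A"
  shows "((\<lambda>c. \<Sum>b\<in>F. f b c) has_sum (\<Sum>b\<in>F. s b)) A"
  using assms
proof (induction F rule: finite_induct)
  case (insert a F)
  have "((\<lambda>c. f a c + (\<Sum>b\<in>F. f b c)) has_sum (s a + (\<Sum>b\<in>F. s b))) A"
    by (rule has_sum_add) (use insert in auto)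
  then show ?case using insert by simp
qed simp

lemma Cauchy_if_dominated_by_Cauchy:
  fixes a :: "nat \<Rightarrow> 'a::real_normed_vector" and q :: "nat \<Rightarrow> real"
  assumes q: "Cauchy q" and k: "k > 0" and C: "C \<ge> 0"
    and dom: "\<And>m n. n \<le> m \<Longrightarrow> norm (a m - a n) ^ k \<le> C * \<bar>q m - q n\<bar>"
  shows "Cauchy a"
proof (rule CauchyI)
  fix e :: real assume e: "0 < e"
  define \<delta> where "\<delta> = e ^ k / (C + 1)"
  have \<delta>: "0 < \<delta>" using e C unfolding \<delta>_def by simp
  obtain M where M: "\<forall>m\<ge>M. \<forall>n\<ge>M. norm (q m - q n) < \<delta>" using CauchyD[OF q \<delta>] by blast
  have lt: "norm (a m - a n) < e" if "m \<ge> M" "n \<ge> M" "n \<le> m" for m n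
  proof -
    have "\<bar>q m - q n\<bar> < \<delta>" using M that(1,2) by simp
    have "norm (a m - a n) ^ k \<le> C * \<bar>q m - q n\<bar>" using dom[OF that(3)] .
    also have "\<dots> \<le> C * \<delta>" using \<open>\<bar>q m - q n\<bar> < \<delta>\<close> C by (intro mult_left_mono) auto
    also have "\<dots> < (C + 1) * \<delta>" using \<delta> by (simp add: distrib_right)
    also have "\<dots> = e ^ k" unfolding \<delta>_def using C by (simp add: field_simps)
    finally have "norm (a m - a n) ^ k < e ^ k" .
    then show ?thesis by (rule power_less_imp_less_base) (use e in simp)
  qed
  show "\<exists>M. \<forall>m\<ge>M. \<forall>n\<ge>M. norm (a m - a n) < e"
  proof (intro exI allI impI)
    fix m n assume "m \<ge> M" "n \<ge> M"
    then show "norm (a m - a n) < e"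
    proof (cases "n \<le> m")
      case False
      then have "norm (a n - a m) < e" using lt \<open>m \<ge> M\<close> \<open>n \<ge> M\<close> by simp
      then show ?thesis by (simp add: norm_minus_commute)
    qed (use lt in simp)
  qed
qed

text \<open>The inner product is a parameter rather than a type class, so that the locale also
  covers the real part of a complex inner product on a space that carries no
  \<^class>\<open>real_inner\<close> instance.\<close>

locale real_hilbert =
  fixes inn :: "'v::real_normed_vector \<Rightarrow> 'v \<Rightarrow> real"
  assumes inn_add_left: "inn (x + y) z = inn x z + inn y z"
    and inn_scaleR_left: "inn (r *\<^sub>R x) y = r * inn x y"
    and inn_commute: "inn x y = inn y x"
    and inn_self: "inn x x = (norm x)^2"
    and inn_complete: "Cauchy (X :: nat \<Rightarrow> 'v) \<Longrightarrow> convergent X"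
begin

lemma inn_add_right: "inn x (y + z) = inn x y + inn x z"
  by (simp only: inn_commute[of x] inn_add_left)

lemma inn_scaleR_right: "inn x (r *\<^sub>R y) = r * inn x y"
  by (simp only: inn_commute[of x] inn_scaleR_left)

lemma inn_zero [simp]: "inn 0 y = 0" "inn y 0 = 0"
  using inn_scaleR_left[of 0 y y] inn_scaleR_right[of y 0 y] by auto

lemma inn_minus: "inn (- x) y = - inn x y" "inn y (- x) = - inn y x"
  using inn_scaleR_left[of "-1" x y] inn_scaleR_right[of y "-1" x] by auto

lemma inn_diff_left: "inn (x - y) z = inn x z - inn y z"
  using inn_add_left[of x "-y" z] inn_minus by simp

lemma inn_diff_right: "inn z (x - y) = inn z x - inn z y"
  using inn_add_right[of z x "-y"] inn_minus by simp

lemma inn_sum_left: "inn (sum f A) y = (\<Sum>i\<in>A. inn (f i) y)"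
  by (induction A rule: infinite_finite_induct) (auto simp: inn_add_left)

lemma inn_sum_right: "inn y (sum f A) = (\<Sum>i\<in>A. inn y (f i))"
  by (induction A rule: infinite_finite_induct) (auto simp: inn_add_right)

lemmas inn_simps = inn_add_left inn_add_right inn_scaleR_left inn_scaleR_right
  inn_diff_left inn_diff_right inn_minus

lemma positive_operator_Cauchy_Schwarz:
  assumes lin: "linear T" and sa: "\<And>x y. inn (T x) y = inn x (T y)"
    and pos: "\<And>x. 0 \<le> inn (T x) x"
  shows "(inn (T a) b)^2 \<le> inn (T a) a * inn (T b) b"
proof -
  define \<alpha> where "\<alpha> = inn (T a) a"
  define \<beta> where "\<beta> = inn (T a) b"
  define \<gamma> where "\<gamma> = inn (T b) b"
  have quadratic: "0 \<le> \<alpha> + 2*t*\<beta> + t^2*\<gamma>" for t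
  proof -
    have "T (a + t *\<^sub>R b) = T a + t *\<^sub>R T b"
      using lin by (simp add: linear_add linear_scale)
    moreover have "inn (T b) a = \<beta>" unfolding \<beta>_def using sa inn_commute by metis
    ultimately have "inn (T (a + t *\<^sub>R b)) (a + t *\<^sub>R b) = \<alpha> + 2*t*\<beta> + t^2*\<gamma>"
      unfolding \<alpha>_def \<beta>_def \<gamma>_def by (simp add: inn_simps algebra_simps power2_eq_square)
    then show ?thesis using pos by metis
  qed
  have "\<gamma> \<ge> 0" unfolding \<gamma>_def using pos by simp
  show ?thesis
  proof (cases "\<gamma> = 0")
    case True
    have "\<beta> = 0"
    proof (rule ccontr)
      assume "\<beta> \<noteq> 0"
      have "0 \<le> \<alpha> + 2*(-(\<alpha>+1)/(2*\<beta>))*\<beta> + (-(\<alpha>+1)/(2*\<beta>))^2*\<gamma>" by (rule quadratic)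
      also have "\<dots> = -1" using \<open>\<beta> \<noteq> 0\<close> True by (simp add: field_simps)
      finally show False by simp
    qed
    then show ?thesis using True unfolding \<beta>_def \<gamma>_def by simp
  next
    case False
    then have "\<gamma> > 0" using \<open>\<gamma> \<ge> 0\<close> by simp
    have "0 \<le> \<alpha> + 2*(-\<beta>/\<gamma>)*\<beta> + (-\<beta>/\<gamma>)^2*\<gamma>" by (rule quadratic)
    also have "\<dots> = (\<alpha>*\<gamma> - \<beta>^2)/\<gamma>" using \<open>\<gamma> > 0\<close> by (simp add: field_simps power2_eq_square)
    finally have "0 \<le> \<alpha>*\<gamma> - \<beta>^2" using \<open>\<gamma> > 0\<close> by (simp add: zero_le_divide_iff)
    then show ?thesis unfolding \<alpha>_def \<beta>_def \<gamma>_def by simp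
  qed
qed

lemma abs_inn_le_norm: "\<bar>inn a b\<bar> \<le> norm a * norm b"
proof -
  have "(inn a b)^2 \<le> inn a a * inn b b"
    using positive_operator_Cauchy_Schwarz[of "\<lambda>x. x" a b]
    by (simp add: inn_self linear_id[unfolded id_def])
  also have "\<dots> = (norm a * norm b)^2" by (simp add: inn_self power_mult_distrib)
  finally have "\<bar>inn a b\<bar> \<le> \<bar>norm a * norm b\<bar>" using abs_le_square_iff by blast
  then show ?thesis by simp
qed

lemma bounded_bilinear_inn: "bounded_bilinear inn"
proof
  show "inn (a + a') b = inn a b + inn a' b" for a a' b by (rule inn_add_left)
  show "inn a (b + b') = inn a b + inn a b'" for a b b' by (rule inn_add_right)
  show "inn (r *\<^sub>R a) b = r *\<^sub>R inn a b" for r a b by (simp add: inn_scaleR_left)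
  show "inn a (r *\<^sub>R b) = r *\<^sub>R inn a b" for r a b by (simp add: inn_scaleR_right)
  show "\<exists>K. \<forall>a b. norm (inn a b) \<le> norm a * norm b * K"
    by (rule exI[of _ 1]) (simp add: abs_inn_le_norm)
qed

lemmas tendsto_inn = bounded_bilinear.tendsto[OF bounded_bilinear_inn]

lemma selfadjoint_funpow:
  assumes sa: "\<And>x y. inn (Y x) y = inn x (Y y)"
  shows "inn ((Y ^^ k) x) y = inn x ((Y ^^ k) y)"
proof (induction k arbitrary: x y)
  case (Suc k)
  have "inn ((Y ^^ Suc k) x) y = inn ((Y ^^ k) x) (Y y)" using sa by simp
  also have "\<dots> = inn x ((Y ^^ k) (Y y))" by (rule Suc)
  also have "(Y ^^ k) (Y y) = (Y ^^ Suc k) y" by (simp add: funpow_swap1)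
  finally show ?case .
qed simp

lemma quadratic_form_diff_kernel:
  assumes "linear T" "\<And>x y. inn (T x) y = inn x (T y)" "T v = 0"
  shows "inn (T (x - v)) (x - v) = inn (T x) x"
proof -
  have "inn (T (x - v)) (x - v) = inn (T x) x - inn (T x) v"
    using assms by (simp add: linear_diff inn_diff_left inn_diff_right)
  also have "inn (T x) v = 0" using assms(2)[of x v] assms(3) by simp
  finally show ?thesis by simp
qed

definition orthonormal :: "'v set \<Rightarrow> bool" where
  "orthonormal B \<longleftrightarrow> (\<forall>b\<in>B. inn b b = 1) \<and> (\<forall>b\<in>B. \<forall>c\<in>B. b \<noteq> c \<longrightarrow> inn b c = 0)"

definition orthonormal_basis :: "'v set \<Rightarrow> bool" where
  "orthonormal_basis B \<longleftrightarrow> orthonormal B \<and> closure (span B) = UNIV"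

lemma orthonormal_subset: "orthonormal B \<Longrightarrow> F \<subseteq> B \<Longrightarrow> orthonormal F"
  unfolding orthonormal_def by (simp add: subset_iff)

lemma sum_inn_orthonormal:
  assumes o: "orthonormal F" and fin: "finite F" and c: "c \<in> F"
  shows "(\<Sum>b\<in>F. r b * inn b c) = r c"
proof -
  have "(\<Sum>b\<in>F. r b * inn b c) = (\<Sum>b\<in>F. if b = c then r c else 0)"
    using o c unfolding orthonormal_def by (intro sum.cong) auto
  also have "\<dots> = r c" using fin c by simp
  finally show ?thesis .
qed

lemma orthogonal_projection:
  fixes x :: 'v
  assumes o: "orthonormal F" and fin: "finite F"
  defines "p \<equiv> (\<Sum>b\<in>F. inn x b *\<^sub>R b)"
  shows orthogonal_projection_orthogonal: "\<And>r. inn (x - p) (\<Sum>b\<in>F. r b *\<^sub>R b) = 0"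
    and orthogonal_projection_Pythagoras: "(norm x)^2 = (norm (x - p))^2 + (\<Sum>b\<in>F. (inn x b)^2)"
proof -
  have pc: "inn p c = inn x c" if "c \<in> F" for c
    unfolding p_def inn_sum_left using sum_inn_orthonormal[OF o fin that, of "\<lambda>b. inn x b"]
    by (simp add: inn_scaleR_left)
  show po: "inn (x - p) (\<Sum>b\<in>F. r b *\<^sub>R b) = 0" for r
    unfolding inn_sum_right by (simp add: inn_scaleR_right inn_diff_left pc)
  have pp: "inn p p = (\<Sum>b\<in>F. (inn x b)^2)"
    by (subst (2) p_def) (simp add: inn_sum_right inn_scaleR_right pc power2_eq_square)
  have "(norm x)^2 = inn ((x - p) + p) ((x - p) + p)" by (simp add: inn_self del: diff_add_cancel)
  also have "\<dots> = inn (x - p) (x - p) + 2 * inn (x - p) p + inn p p"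
    unfolding inn_add_left inn_add_right inn_commute[of p "x - p"] by simp
  also have "inn (x - p) p = 0" using po[of "\<lambda>b. inn x b"] unfolding p_def .
  finally show "(norm x)^2 = (norm (x - p))^2 + (\<Sum>b\<in>F. (inn x b)^2)"
    unfolding pp inn_self[of "x - p"] by simp
qed

lemma Bessel_inequality:
  assumes "orthonormal F" "finite F"
  shows "(\<Sum>b\<in>F. (inn x b)^2) \<le> (norm x)^2"
  using orthogonal_projection_Pythagoras[OF assms, of x] by simp

lemma best_approximation:
  assumes o: "orthonormal F" and fin: "finite F"
  shows "(norm x)^2 - (\<Sum>b\<in>F. (inn x b)^2) \<le> (norm (x - (\<Sum>b\<in>F. r b *\<^sub>R b)))^2"
proof -
  define p where "p = (\<Sum>b\<in>F. inn x b *\<^sub>R b)"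
  define y where "y = (\<Sum>b\<in>F. r b *\<^sub>R b)"
  have py: "p - y = (\<Sum>b\<in>F. (inn x b - r b) *\<^sub>R b)"
    unfolding p_def y_def by (simp add: sum_subtractf scaleR_diff_left)
  have o0: "inn (x - p) (p - y) = 0"
    unfolding py unfolding p_def by (rule orthogonal_projection_orthogonal[OF o fin])
  have "(norm (x - y))^2 = inn ((x - p) + (p - y)) ((x - p) + (p - y))"
    by (simp add: inn_self del: diff_add_cancel)
  also have "\<dots> = inn (x - p) (x - p) + 2 * inn (x - p) (p - y) + inn (p - y) (p - y)"
    unfolding inn_add_left inn_add_right inn_commute[of "p - y" "x - p"] by simp
  also have "\<dots> \<ge> (norm (x - p))^2" using o0 by (simp add: inn_self)
  finally have "(norm (x - p))^2 \<le> (norm (x - y))^2" .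
  moreover have "(norm x)^2 = (norm (x - p))^2 + (\<Sum>b\<in>F. (inn x b)^2)"
    unfolding p_def by (rule orthogonal_projection_Pythagoras[OF o fin])
  ultimately show ?thesis unfolding y_def by simp
qed

lemma Parseval_identity:
  assumes B: "orthonormal_basis B"
  shows "((\<lambda>b. (inn x b)^2) has_sum (norm x)^2) B"
proof -
  have o: "orthonormal B" using B orthonormal_basis_def by blast
  have sm: "(\<lambda>b. (inn x b)^2) summable_on B"
  proof (rule nonneg_bdd_above_summable_on)
    show "bdd_above (sum (\<lambda>b. (inn x b)^2) ` {F. F \<subseteq> B \<and> finite F})"
      using Bessel_inequality orthonormal_subset[OF o] by (intro bdd_aboveI[of _ "(norm x)^2"]) auto
  qed simp
  define s where "s = infsum (\<lambda>b. (inn x b)^2) B"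
  have le: "s \<le> (norm x)^2" unfolding s_def
    using sm Bessel_inequality orthonormal_subset[OF o] by (intro infsum_le_finite_sums) auto
  have ge: "(norm x)^2 \<le> s"
  proof (rule ccontr)
    assume "\<not> (norm x)^2 \<le> s"
    then have d: "(norm x)^2 - s > 0" by simp
    define e where "e = sqrt ((norm x)^2 - s)"
    have e: "e > 0" using d unfolding e_def by simp
    have "x \<in> closure (span B)" using B unfolding orthonormal_basis_def by simp
    then obtain y where y: "y \<in> span B" "dist y x < e" using e closure_approachable by metis
    obtain t r where tr: "finite t" "t \<subseteq> B" "y = (\<Sum>a\<in>t. r a *\<^sub>R a)"
      using y(1) unfolding span_explicit by blast
    have "(norm x)^2 - (\<Sum>b\<in>t. (inn x b)^2) \<le> (norm (x - y))^2"
      using best_approximation[OF orthonormal_subset[OF o tr(2)] tr(1)] tr(3) by simp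
    also have "\<dots> < e^2" using y(2) by (simp add: dist_norm norm_minus_commute power_strict_mono)
    also have "\<dots> = (norm x)^2 - s" unfolding e_def using d by simp
    finally have "s < (\<Sum>b\<in>t. (inn x b)^2)" by simp
    moreover have "(\<Sum>b\<in>t. (inn x b)^2) \<le> s" unfolding s_def
      using sm tr by (intro finite_sum_le_infsum) auto
    ultimately show False by simp
  qed
  show ?thesis using sm le ge s_def has_sum_infsum by (metis antisym)
qed

text \<open>For a self-adjoint \<open>S\<close>, \<open>\<Sum>\<^sub>b \<parallel>S b\<parallel>\<^sup>2 = \<Sum>\<^sub>b \<Sum>\<^sub>c \<langle>S b, c\<rangle>\<^sup>2\<close> is symmetric in the two
  bases, so Bessel's inequality bounds finite partial sums over one basis by the full
  sum over the other.\<close>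

lemma Hilbert_Schmidt_summable_basis_independent:
  assumes B1: "orthonormal_basis B1" and B2: "orthonormal_basis B2"
    and sa: "\<And>x y. inn (S x) y = inn x (S y)"
    and sm: "(\<lambda>c. (norm (S c))^2) summable_on B2"
  shows "(\<lambda>b. (norm (S b))^2) summable_on B1"
proof (rule nonneg_bdd_above_summable_on)
  have o1: "orthonormal B1" using B1 orthonormal_basis_def by blast
  show "bdd_above (sum (\<lambda>b. (norm (S b))^2) ` {F. F \<subseteq> B1 \<and> finite F})"
  proof (rule bdd_aboveI[of _ "infsum (\<lambda>c. (norm (S c))^2) B2"], clarsimp)
    fix F assume F: "F \<subseteq> B1" "finite F"
    have oF: "orthonormal F" using orthonormal_subset[OF o1 F(1)] .
    have hs: "((\<lambda>c. \<Sum>b\<in>F. (inn (S b) c)^2) has_sum (\<Sum>b\<in>F. (norm (S b))^2)) B2"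
      using F(2) Parseval_identity[OF B2] by (intro has_sum_sum_finite) auto
    have "(\<Sum>b\<in>F. (norm (S b))^2) = infsum (\<lambda>c. \<Sum>b\<in>F. (inn (S b) c)^2) B2"
      using hs infsumI by metis
    also have "\<dots> \<le> infsum (\<lambda>c. (norm (S c))^2) B2"
    proof (rule infsum_mono)
      show "(\<lambda>c. \<Sum>b\<in>F. (inn (S b) c)^2) summable_on B2" using hs has_sum_imp_summable by blast
      show "(\<lambda>c. (norm (S c))^2) summable_on B2" by (rule sm)
      fix c
      have "(\<Sum>b\<in>F. (inn (S b) c)^2) = (\<Sum>b\<in>F. (inn (S c) b)^2)"
        using sa inn_commute by (intro sum.cong) (auto simp: power2_eq_square)
      also have "\<dots> \<le> (norm (S c))^2" by (rule Bessel_inequality[OF oF F(2)])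
      finally show "(\<Sum>b\<in>F. (inn (S b) c)^2) \<le> (norm (S c))^2" .
    qed
    finally show "(\<Sum>b\<in>F. (norm (S b))^2) \<le> infsum (\<lambda>c. (norm (S c))^2) B2" .
  qed
qed simp

end

section \<open>Square roots by monotone iteration\<close>

inductive_set nonneg_poly :: "('v::real_normed_vector \<Rightarrow> 'v) \<Rightarrow> ('v \<Rightarrow> 'v) set" for Y where
  power: "(Y ^^ k) \<in> nonneg_poly Y"
| add: "U \<in> nonneg_poly Y \<Longrightarrow> V \<in> nonneg_poly Y \<Longrightarrow> (\<lambda>x. U x + V x) \<in> nonneg_poly Y"
| scaleR: "c \<ge> 0 \<Longrightarrow> U \<in> nonneg_poly Y \<Longrightarrow> (\<lambda>x. c *\<^sub>R U x) \<in> nonneg_poly Y"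

lemma bounded_linear_funpow:
  fixes Y :: "'v::real_normed_vector \<Rightarrow> 'v"
  assumes "bounded_linear Y"
  shows "bounded_linear (Y ^^ k)"
proof (induction k)
  case (Suc k)
  have "bounded_linear (\<lambda>x. Y ((Y ^^ k) x))" by (rule bounded_linear_compose) (use Suc assms in auto)
  then show ?case by (simp add: o_def)
qed (simp add: id_def)

lemma nonneg_poly_bounded_linear: "U \<in> nonneg_poly Y \<Longrightarrow> bounded_linear Y \<Longrightarrow> bounded_linear U"
proof (induction rule: nonneg_poly.induct)
  case (power k) then show ?case by (rule bounded_linear_funpow)
next
  case (add U V) then show ?case by (simp add: bounded_linear_add)
next
  case (scaleR c U) then show ?case
    using bounded_linear_compose[OF bounded_linear_scaleR_right[of c], of U] by simp
qed

lemma nonneg_poly_linear: "U \<in> nonneg_poly Y \<Longrightarrow> bounded_linear Y \<Longrightarrow> linear U"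
  using nonneg_poly_bounded_linear bounded_linear.linear by blast

lemma nonneg_poly_commute:
  assumes "U \<in> nonneg_poly Y" "linear L" "\<And>x. L (Y x) = Y (L x)"
  shows "L (U x) = U (L x)"
  using assms
proof (induction arbitrary: x rule: nonneg_poly.induct)
  case (power k)
  show ?case by (induction k arbitrary: x) (use power in simp_all)
next
  case (add U V) then show ?case by (simp add: linear_add)
next
  case (scaleR c U) then show ?case by (simp add: linear_scale)
qed

lemma nonneg_poly_zero: "(\<lambda>x. 0) \<in> nonneg_poly Y"
  using nonneg_poly.scaleR[where c=0 and U="Y ^^ 0" and Y=Y] nonneg_poly.power[where Y=Y and k=0]
  by simp

lemma nonneg_poly_self: "Y \<in> nonneg_poly Y"
  using nonneg_poly.power[where Y=Y and k=1] by simp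

lemma nonneg_poly_comp_funpow:
  assumes "U \<in> nonneg_poly Y"
  shows "(\<lambda>x. U ((Y ^^ k) x)) \<in> nonneg_poly Y"
  using assms
proof (induction rule: nonneg_poly.induct)
  case (power j)
  have "(\<lambda>x. (Y ^^ j) ((Y ^^ k) x)) = Y ^^ (j + k)" by (simp add: funpow_add o_def)
  then show ?case using nonneg_poly.power by metis
next
  case (add U V) then show ?case using nonneg_poly.add by blast
next
  case (scaleR c U) then show ?case using nonneg_poly.scaleR by blast
qed

lemma nonneg_poly_comp:
  assumes "V \<in> nonneg_poly Y" "U \<in> nonneg_poly Y" "bounded_linear Y"
  shows "(\<lambda>x. U (V x)) \<in> nonneg_poly Y"
  using assms
proof (induction rule: nonneg_poly.induct)
  case (power k) then show ?case using nonneg_poly_comp_funpow by blast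
next
  case (add V1 V2)
  have "linear U" using nonneg_poly_linear add by blast
  then have "(\<lambda>x. U (V1 x + V2 x)) = (\<lambda>x. U (V1 x) + U (V2 x))" by (simp add: linear_add)
  then show ?case using nonneg_poly.add add by metis
next
  case (scaleR c V)
  have "linear U" using nonneg_poly_linear scaleR by blast
  then have "(\<lambda>x. U (c *\<^sub>R V x)) = (\<lambda>x. c *\<^sub>R U (V x))" by (simp add: linear_scale)
  then show ?case using nonneg_poly.scaleR scaleR by metis
qed

lemma nonneg_poly_comp_commute:
  assumes "U \<in> nonneg_poly Y" "V \<in> nonneg_poly Y" "bounded_linear Y"
  shows "U (V x) = V (U x)"
proof -
  have "Y (V x) = V (Y x)" for x
    using nonneg_poly_commute[OF assms(2), of Y] assms(3) bounded_linear.linear by blast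
  then show ?thesis
    using nonneg_poly_commute[OF assms(1), of V] nonneg_poly_linear[OF assms(2,3)] by metis
qed

text \<open>For \<open>0 \<le> Y \<le> 1\<close> the iterates \<open>Z\<^sub>n\<^sub>+\<^sub>1 = (Y + Z\<^sub>n\<^sup>2)/2\<close> increase to the solution
  \<open>Z = 1 - sqrt(1 - Y)\<close> of \<open>Z = (Y + Z\<^sup>2)/2\<close>.\<close>

primrec compl_sqrt_iter :: "('v::real_normed_vector \<Rightarrow> 'v) \<Rightarrow> nat \<Rightarrow> 'v \<Rightarrow> 'v" where
  "compl_sqrt_iter Y 0 = (\<lambda>x. 0)"
| "compl_sqrt_iter Y (Suc n) =
     (\<lambda>x. (1/2) *\<^sub>R (Y x + compl_sqrt_iter Y n (compl_sqrt_iter Y n x)))"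

definition compl_sqrt :: "('v::real_normed_vector \<Rightarrow> 'v) \<Rightarrow> 'v \<Rightarrow> 'v" where
  "compl_sqrt Y x = lim (\<lambda>n. compl_sqrt_iter Y n x)"

lemma compl_sqrt_iter_nonneg_poly: "bounded_linear Y \<Longrightarrow> compl_sqrt_iter Y n \<in> nonneg_poly Y"
proof (induction n)
  case 0 then show ?case using nonneg_poly_zero by simp
next
  case (Suc n)
  have "(\<lambda>x. compl_sqrt_iter Y n (compl_sqrt_iter Y n x)) \<in> nonneg_poly Y"
    using nonneg_poly_comp Suc by blast
  then have "(\<lambda>x. Y x + compl_sqrt_iter Y n (compl_sqrt_iter Y n x)) \<in> nonneg_poly Y"
    using nonneg_poly.add nonneg_poly_self by blast
  then show ?case using nonneg_poly.scaleR[of "1/2"] by simp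
qed

text \<open>\<open>Z\<^sub>n\<^sub>+\<^sub>2 - Z\<^sub>n\<^sub>+\<^sub>1 = (Z\<^sub>n\<^sub>+\<^sub>1 + Z\<^sub>n)(Z\<^sub>n\<^sub>+\<^sub>1 - Z\<^sub>n)/2\<close>, so the increments stay in the cone.\<close>

lemma compl_sqrt_iter_step_nonneg_poly:
  assumes Y: "bounded_linear Y"
  shows "(\<lambda>x. compl_sqrt_iter Y (Suc n) x - compl_sqrt_iter Y n x) \<in> nonneg_poly Y"
proof (induction n)
  case 0
  have "(\<lambda>x. (1/2) *\<^sub>R Y x) \<in> nonneg_poly Y" by (rule nonneg_poly.scaleR) (auto intro: nonneg_poly_self)
  then show ?case by simp
next
  case (Suc n)
  define Z1 where "Z1 = compl_sqrt_iter Y (Suc n)"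
  define Z0 where "Z0 = compl_sqrt_iter Y n"
  have N1: "Z1 \<in> nonneg_poly Y" and N0: "Z0 \<in> nonneg_poly Y"
    using compl_sqrt_iter_nonneg_poly Y unfolding Z1_def Z0_def by blast+
  have l1: "linear Z1" and l0: "linear Z0" using nonneg_poly_linear N1 N0 Y by blast+
  have W: "(\<lambda>x. Z1 x + Z0 x) \<in> nonneg_poly Y" using nonneg_poly.add N1 N0 by blast
  have D: "(\<lambda>x. Z1 x - Z0 x) \<in> nonneg_poly Y" using Suc unfolding Z1_def Z0_def .
  have "(\<lambda>x. (1/2) *\<^sub>R (Z1 (Z1 x - Z0 x) + Z0 (Z1 x - Z0 x))) \<in> nonneg_poly Y"
    using nonneg_poly.scaleR[of "1/2"] nonneg_poly_comp[OF D W Y] by simp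
  moreover have "(\<lambda>x. (1/2) *\<^sub>R (Z1 (Z1 x - Z0 x) + Z0 (Z1 x - Z0 x)))
      = (\<lambda>x. compl_sqrt_iter Y (Suc (Suc n)) x - compl_sqrt_iter Y (Suc n) x)"
  proof
    fix x
    have "Z1 (Z1 x - Z0 x) + Z0 (Z1 x - Z0 x) = Z1 (Z1 x) - Z0 (Z0 x)"
      using nonneg_poly_comp_commute[OF N1 N0 Y, of x]
      by (simp add: linear_diff[OF l1] linear_diff[OF l0])
    moreover have "compl_sqrt_iter Y (Suc (Suc n)) x - compl_sqrt_iter Y (Suc n) x
        = (1/2) *\<^sub>R (Z1 (Z1 x) - Z0 (Z0 x))"
      unfolding Z1_def Z0_def by (simp add: algebra_simps)
    ultimately show "(1/2) *\<^sub>R (Z1 (Z1 x - Z0 x) + Z0 (Z1 x - Z0 x))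
        = compl_sqrt_iter Y (Suc (Suc n)) x - compl_sqrt_iter Y (Suc n) x" by simp
  qed
  ultimately show ?case by simp
qed

lemma compl_sqrt_iter_diff_nonneg_poly:
  assumes Y: "bounded_linear Y" and "n \<le> m"
  shows "(\<lambda>x. compl_sqrt_iter Y m x - compl_sqrt_iter Y n x) \<in> nonneg_poly Y"
  using \<open>n \<le> m\<close>
proof (induction m rule: dec_induct)
  case base then show ?case using nonneg_poly_zero by simp
next
  case (step m)
  have "(\<lambda>x. (compl_sqrt_iter Y (Suc m) x - compl_sqrt_iter Y m x)
            + (compl_sqrt_iter Y m x - compl_sqrt_iter Y n x)) \<in> nonneg_poly Y"
    using nonneg_poly.add[OF compl_sqrt_iter_step_nonneg_poly[OF Y, of m] step(3)] .
  then show ?case by simp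
qed

context real_hilbert
begin

lemma nonneg_poly_selfadjoint:
  assumes "U \<in> nonneg_poly Y" "\<And>x y. inn (Y x) y = inn x (Y y)"
  shows "inn (U x) y = inn x (U y)"
  using assms
proof (induction arbitrary: x y rule: nonneg_poly.induct)
  case (power k) then show ?case using selfadjoint_funpow by blast
next
  case (add U V) then show ?case by (simp add: inn_add_left inn_add_right)
next
  case (scaleR c U) then show ?case by (simp add: inn_scaleR_left inn_scaleR_right)
qed

text \<open>Even powers are squares \<open>Y\<^sup>j Y\<^sup>j\<close> and odd ones are \<open>Y\<^sup>j Y Y\<^sup>j\<close>.\<close>

lemma nonneg_poly_positive:
  assumes "U \<in> nonneg_poly Y" "\<And>x y. inn (Y x) y = inn x (Y y)" "\<And>x. 0 \<le> inn (Y x) x"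
  shows "0 \<le> inn (U x) x"
  using assms
proof (induction arbitrary: x rule: nonneg_poly.induct)
  case (power k)
  have "k = k div 2 + k div 2 \<or> k = k div 2 + (1 + k div 2)" by presburger
  then obtain j where "k = j + j \<or> k = j + (1 + j)" by blast
  then show ?case
  proof
    assume k: "k = j + j"
    have "inn ((Y ^^ k) x) x = inn ((Y ^^ j) ((Y ^^ j) x)) x" unfolding k funpow_add by simp
    also have "\<dots> = inn ((Y ^^ j) x) ((Y ^^ j) x)" by (rule selfadjoint_funpow[OF power(1)])
    finally show ?thesis by (simp add: inn_self)
  next
    assume k: "k = j + (1 + j)"
    have "inn ((Y ^^ k) x) x = inn ((Y ^^ j) (Y ((Y ^^ j) x))) x" unfolding k funpow_add by simp
    also have "\<dots> = inn (Y ((Y ^^ j) x)) ((Y ^^ j) x)" by (rule selfadjoint_funpow[OF power(1)])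
    finally show ?thesis using power(2) by simp
  qed
next
  case (add U V) then show ?case by (simp add: inn_add_left)
next
  case (scaleR c U) then show ?case by (simp add: inn_scaleR_left)
qed

lemma compl_sqrt_iter_norm_le:
  assumes Yn: "\<And>x. norm (Y x) \<le> norm x"
  shows "norm (compl_sqrt_iter Y n x) \<le> norm x"
proof (induction n arbitrary: x)
  case (Suc n)
  have "norm (compl_sqrt_iter Y (Suc n) x)
      \<le> (1/2) * (norm (Y x) + norm (compl_sqrt_iter Y n (compl_sqrt_iter Y n x)))"
    by (simp add: norm_triangle_ineq)
  also have "\<dots> \<le> (1/2) * (norm x + norm x)"
    using Yn[of x] Suc[of "compl_sqrt_iter Y n x"] Suc[of x] by simp
  finally show ?case by simp
qed simp

context
  fixes Y :: "'v \<Rightarrow> 'v"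
  assumes Y_bounded_linear: "bounded_linear Y"
    and Y_selfadjoint: "\<And>x y. inn (Y x) y = inn x (Y y)"
    and Y_positive: "\<And>x. 0 \<le> inn (Y x) x"
    and Y_contraction: "\<And>x. norm (Y x) \<le> norm x"
begin

lemma compl_sqrt_iter_linear: "linear (compl_sqrt_iter Y n)"
  using nonneg_poly_linear[OF compl_sqrt_iter_nonneg_poly[OF Y_bounded_linear] Y_bounded_linear] .

text \<open>With \<open>D = Z\<^sub>m - Z\<^sub>n \<ge> 0\<close>, the Cauchy--Schwarz inequality for \<open>D\<close> gives
  \<open>\<parallel>D x\<parallel>\<^sup>4 \<le> \<langle>D x, x\<rangle> \<langle>D(D x), D x\<rangle>\<close>, and \<open>\<langle>D x, x\<rangle>\<close> is an increment of the bounded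
  increasing sequence \<open>\<langle>Z\<^sub>n x, x\<rangle>\<close>.\<close>

lemma compl_sqrt_iter_increment:
  fixes x :: 'v
  assumes "n \<le> m"
  defines "q \<equiv> \<lambda>n. inn (compl_sqrt_iter Y n x) x"
  shows "q n \<le> q m"
    and "norm (compl_sqrt_iter Y m x - compl_sqrt_iter Y n x) ^ 4 \<le> 8 * (norm x)^2 * \<bar>q m - q n\<bar>"
proof -
  define D where "D = (\<lambda>x. compl_sqrt_iter Y m x - compl_sqrt_iter Y n x)"
  have DN: "D \<in> nonneg_poly Y"
    unfolding D_def using compl_sqrt_iter_diff_nonneg_poly[OF Y_bounded_linear assms(1)] .
  have Dl: "linear D" using nonneg_poly_linear[OF DN Y_bounded_linear] .
  have Ds: "\<And>a b. inn (D a) b = inn a (D b)" using nonneg_poly_selfadjoint[OF DN Y_selfadjoint] .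
  have Dp: "\<And>a. 0 \<le> inn (D a) a" using nonneg_poly_positive[OF DN Y_selfadjoint Y_positive] .
  have Dn: "norm (D z) \<le> 2 * norm z" for z
  proof -
    have "norm (D z) \<le> norm (compl_sqrt_iter Y m z) + norm (compl_sqrt_iter Y n z)"
      unfolding D_def by (rule norm_triangle_ineq4)
    also have "\<dots> \<le> norm z + norm z" using compl_sqrt_iter_norm_le[OF Y_contraction] by (intro add_mono)
    finally show ?thesis by simp
  qed
  have qd: "inn (D x) x = q m - q n" unfolding D_def q_def by (simp add: inn_diff_left)
  then show "q n \<le> q m" using Dp[of x] by simp
  have "inn (D (D x)) (D x) \<le> norm (D (D x)) * norm (D x)"
    using abs_inn_le_norm[of "D (D x)" "D x"] by simp
  also have "\<dots> \<le> (2 * norm (D x)) * norm (D x)" using Dn by (intro mult_right_mono) auto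
  also have "\<dots> \<le> (2 * (2 * norm x)) * (2 * norm x)" using Dn[of x] by (intro mult_mono) auto
  finally have DDx: "inn (D (D x)) (D x) \<le> 8 * (norm x)^2" by (simp add: power2_eq_square)
  have "norm (D x) ^ 4 = (inn (D x) (D x))^2" by (simp add: inn_self flip: power_mult)
  also have "\<dots> \<le> inn (D x) x * inn (D (D x)) (D x)"
    using positive_operator_Cauchy_Schwarz[OF Dl Ds Dp] .
  also have "\<dots> \<le> inn (D x) x * (8 * (norm x)^2)" using DDx Dp[of x] by (rule mult_left_mono)
  also have "\<dots> = 8 * (norm x)^2 * \<bar>q m - q n\<bar>" using Dp[of x] unfolding qd by simp
  finally show "norm (compl_sqrt_iter Y m x - compl_sqrt_iter Y n x) ^ 4 \<le> 8 * (norm x)^2 * \<bar>q m - q n\<bar>"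
    unfolding D_def .
qed

lemma compl_sqrt_iter_Cauchy: "Cauchy (\<lambda>n. compl_sqrt_iter Y n x)"
proof -
  define q where "q n = inn (compl_sqrt_iter Y n x) x" for n
  have "incseq q" unfolding incseq_def q_def using compl_sqrt_iter_increment(1) by blast
  moreover have "q n \<le> (norm x)^2" for n
  proof -
    have "q n \<le> norm (compl_sqrt_iter Y n x) * norm x"
      unfolding q_def using abs_inn_le_norm[of "compl_sqrt_iter Y n x" x] by simp
    also have "\<dots> \<le> norm x * norm x"
      using compl_sqrt_iter_norm_le[OF Y_contraction] by (intro mult_right_mono) auto
    finally show ?thesis by (simp add: power2_eq_square)
  qed
  ultimately obtain L where "q \<longlonglongrightarrow> L" using incseq_convergent by blast
  then have "Cauchy q" by (rule LIMSEQ_imp_Cauchy)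
  then show ?thesis
  proof (rule Cauchy_if_dominated_by_Cauchy[where k=4 and C="8 * (norm x)^2"])
    show "norm (compl_sqrt_iter Y m x - compl_sqrt_iter Y n x) ^ 4 \<le> 8 * (norm x)^2 * \<bar>q m - q n\<bar>"
      if "n \<le> m" for m n
      unfolding q_def by (rule compl_sqrt_iter_increment(2)[OF that])
  qed simp_all
qed

lemma compl_sqrt_iter_tendsto: "(\<lambda>n. compl_sqrt_iter Y n x) \<longlonglongrightarrow> compl_sqrt Y x"
  unfolding compl_sqrt_def using inn_complete[OF compl_sqrt_iter_Cauchy] convergent_LIMSEQ_iff by blast

lemma compl_sqrt_add: "compl_sqrt Y (a + b) = compl_sqrt Y a + compl_sqrt Y b"
proof (rule LIMSEQ_unique[OF compl_sqrt_iter_tendsto])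
  have "(\<lambda>n. compl_sqrt_iter Y n a + compl_sqrt_iter Y n b) \<longlonglongrightarrow> compl_sqrt Y a + compl_sqrt Y b"
    by (intro tendsto_add compl_sqrt_iter_tendsto)
  then show "(\<lambda>n. compl_sqrt_iter Y n (a + b)) \<longlonglongrightarrow> compl_sqrt Y a + compl_sqrt Y b"
    by (simp add: linear_add[OF compl_sqrt_iter_linear])
qed

lemma compl_sqrt_scaleR: "compl_sqrt Y (r *\<^sub>R a) = r *\<^sub>R compl_sqrt Y a"
proof (rule LIMSEQ_unique[OF compl_sqrt_iter_tendsto])
  have "(\<lambda>n. r *\<^sub>R compl_sqrt_iter Y n a) \<longlonglongrightarrow> r *\<^sub>R compl_sqrt Y a"
    by (intro tendsto_scaleR tendsto_const compl_sqrt_iter_tendsto)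
  then show "(\<lambda>n. compl_sqrt_iter Y n (r *\<^sub>R a)) \<longlonglongrightarrow> r *\<^sub>R compl_sqrt Y a"
    by (simp add: linear_scale[OF compl_sqrt_iter_linear])
qed

lemma compl_sqrt_norm_le: "norm (compl_sqrt Y x) \<le> norm x"
  by (rule LIMSEQ_le_const2[OF tendsto_norm[OF compl_sqrt_iter_tendsto]])
    (use compl_sqrt_iter_norm_le[OF Y_contraction] in auto)

lemma bounded_linear_compl_sqrt: "bounded_linear (compl_sqrt Y)"
  by (rule bounded_linear_intro[where K=1])
    (auto simp: compl_sqrt_add compl_sqrt_scaleR compl_sqrt_norm_le)

lemma compl_sqrt_selfadjoint: "inn (compl_sqrt Y a) b = inn a (compl_sqrt Y b)"
proof (rule LIMSEQ_unique)
  show "(\<lambda>n. inn (compl_sqrt_iter Y n a) b) \<longlonglongrightarrow> inn (compl_sqrt Y a) b"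
    by (intro tendsto_inn compl_sqrt_iter_tendsto tendsto_const)
  have "(\<lambda>n. inn a (compl_sqrt_iter Y n b)) \<longlonglongrightarrow> inn a (compl_sqrt Y b)"
    by (intro tendsto_inn compl_sqrt_iter_tendsto tendsto_const)
  then show "(\<lambda>n. inn (compl_sqrt_iter Y n a) b) \<longlonglongrightarrow> inn a (compl_sqrt Y b)"
    using nonneg_poly_selfadjoint[OF compl_sqrt_iter_nonneg_poly[OF Y_bounded_linear] Y_selfadjoint]
    by simp
qed

lemma compl_sqrt_commute:
  assumes L: "bounded_linear L" and c: "\<And>x. L (Y x) = Y (L x)"
  shows "L (compl_sqrt Y x) = compl_sqrt Y (L x)"
proof (rule LIMSEQ_unique)
  show "(\<lambda>n. L (compl_sqrt_iter Y n x)) \<longlonglongrightarrow> L (compl_sqrt Y x)"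
    by (rule bounded_linear.tendsto[OF L compl_sqrt_iter_tendsto])
  have "L (compl_sqrt_iter Y n x) = compl_sqrt_iter Y n (L x)" for n
    using nonneg_poly_commute[OF compl_sqrt_iter_nonneg_poly[OF Y_bounded_linear], of L]
      L c bounded_linear.linear by blast
  then show "(\<lambda>n. L (compl_sqrt_iter Y n x)) \<longlonglongrightarrow> compl_sqrt Y (L x)"
    using compl_sqrt_iter_tendsto by simp
qed

lemma inn_compl_sqrt_le: "inn (compl_sqrt Y x) x \<le> (norm x)^2"
proof -
  have "inn (compl_sqrt Y x) x \<le> norm (compl_sqrt Y x) * norm x"
    using abs_inn_le_norm[of "compl_sqrt Y x" x] by simp
  also have "\<dots> \<le> norm x * norm x" using compl_sqrt_norm_le by (intro mult_right_mono) auto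
  finally show ?thesis by (simp add: power2_eq_square)
qed

lemma compl_sqrt_fixed_point: "compl_sqrt Y x = (1/2) *\<^sub>R (Y x + compl_sqrt Y (compl_sqrt Y x))"
proof (rule LIMSEQ_unique)
  show "(\<lambda>n. compl_sqrt_iter Y (Suc n) x) \<longlonglongrightarrow> compl_sqrt Y x"
    by (rule LIMSEQ_Suc[OF compl_sqrt_iter_tendsto])
  define z where "z = compl_sqrt Y x"
  have "(\<lambda>n. compl_sqrt_iter Y n (compl_sqrt_iter Y n x) - compl_sqrt Y z) \<longlonglongrightarrow> 0"
  proof (rule Lim_null_comparison)
    show "\<forall>\<^sub>F n in sequentially. norm (compl_sqrt_iter Y n (compl_sqrt_iter Y n x) - compl_sqrt Y z)
        \<le> norm (compl_sqrt_iter Y n x - z) + norm (compl_sqrt_iter Y n z - compl_sqrt Y z)"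
    proof (intro always_eventually allI)
      fix n
      have "compl_sqrt_iter Y n (compl_sqrt_iter Y n x) - compl_sqrt Y z
          = compl_sqrt_iter Y n (compl_sqrt_iter Y n x - z) + (compl_sqrt_iter Y n z - compl_sqrt Y z)"
        by (simp add: linear_diff[OF compl_sqrt_iter_linear])
      then have "norm (compl_sqrt_iter Y n (compl_sqrt_iter Y n x) - compl_sqrt Y z)
          \<le> norm (compl_sqrt_iter Y n (compl_sqrt_iter Y n x - z))
             + norm (compl_sqrt_iter Y n z - compl_sqrt Y z)"
        by (metis norm_triangle_ineq)
      also have "\<dots> \<le> norm (compl_sqrt_iter Y n x - z) + norm (compl_sqrt_iter Y n z - compl_sqrt Y z)"
        using compl_sqrt_iter_norm_le[OF Y_contraction] by (intro add_right_mono)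
      finally show "norm (compl_sqrt_iter Y n (compl_sqrt_iter Y n x) - compl_sqrt Y z)
          \<le> norm (compl_sqrt_iter Y n x - z) + norm (compl_sqrt_iter Y n z - compl_sqrt Y z)" .
    qed
    show "(\<lambda>n. norm (compl_sqrt_iter Y n x - z) + norm (compl_sqrt_iter Y n z - compl_sqrt Y z))
        \<longlonglongrightarrow> 0"
      using tendsto_add[OF tendsto_norm_zero[OF LIM_zero[OF compl_sqrt_iter_tendsto[of x]]]
          tendsto_norm_zero[OF LIM_zero[OF compl_sqrt_iter_tendsto[of z]]]]
      unfolding z_def by simp
  qed
  then have "(\<lambda>n. compl_sqrt_iter Y n (compl_sqrt_iter Y n x)) \<longlonglongrightarrow> compl_sqrt Y z"
    by (rule LIM_zero_cancel)
  then have "(\<lambda>n. (1/2) *\<^sub>R (Y x + compl_sqrt_iter Y n (compl_sqrt_iter Y n x)))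
      \<longlonglongrightarrow> (1/2) *\<^sub>R (Y x + compl_sqrt Y z)"
    by (intro tendsto_scaleR tendsto_add tendsto_const)
  then show "(\<lambda>n. compl_sqrt_iter Y (Suc n) x) \<longlonglongrightarrow> (1/2) *\<^sub>R (Y x + compl_sqrt Y (compl_sqrt Y x))"
    unfolding z_def by simp
qed

end

section \<open>The absolute value of a self-adjoint operator\<close>

lemma even_powers_convergent:
  assumes sa: "\<And>x y. inn (Y x) y = inn x (Y y)" and contr: "\<And>x. norm (Y x) \<le> norm x"
  shows "convergent (\<lambda>n. (Y ^^ (2 * n)) x)"
proof -
  define c where "c n = (Y ^^ (2 * n)) x" for n
  define s where "s k = (norm ((Y ^^ k) x))^2" for k
  have "decseq s" unfolding decseq_def s_def
  proof (intro allI impI)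
    fix m n :: nat assume "m \<le> n"
    then show "(norm ((Y ^^ n) x))^2 \<le> (norm ((Y ^^ m) x))^2"
    proof (induction n rule: dec_induct)
      case (step n)
      have "norm ((Y ^^ Suc n) x) \<le> norm ((Y ^^ n) x)" using contr by simp
      then have "(norm ((Y ^^ Suc n) x))^2 \<le> (norm ((Y ^^ n) x))^2" by (intro power_mono) auto
      then show ?case using step by simp
    qed simp
  qed
  moreover have "\<forall>i. 0 \<le> s i" unfolding s_def by simp
  ultimately obtain L where L: "s \<longlonglongrightarrow> L" "\<And>i. L \<le> s i"
    using decseq_convergent by blast
  have inn_c: "inn (c m) (c n) = s (m + n)" for m n
  proof -
    have "inn (c m) (c n) = inn ((Y ^^ (2 * n)) ((Y ^^ (2 * m)) x)) x"
      unfolding c_def by (rule selfadjoint_funpow[OF sa, symmetric])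
    also have "(Y ^^ (2 * n)) ((Y ^^ (2 * m)) x) = (Y ^^ (m + n)) ((Y ^^ (m + n)) x)"
    proof -
      have "(Y ^^ (2 * n)) ((Y ^^ (2 * m)) x) = (Y ^^ (2 * n + 2 * m)) x"
        by (simp only: funpow_add o_apply)
      also have "2 * n + 2 * m = (m + n) + (m + n)" by simp
      finally show ?thesis by (simp only: funpow_add o_apply)
    qed
    also have "inn ((Y ^^ (m + n)) ((Y ^^ (m + n)) x)) x = inn ((Y ^^ (m + n)) x) ((Y ^^ (m + n)) x)"
      by (rule selfadjoint_funpow[OF sa])
    finally show ?thesis unfolding s_def by (simp add: inn_self)
  qed
  have dist_c: "(norm (c m - c n))^2 = s (2 * m) + s (2 * n) - 2 * s (m + n)" for m n
  proof -
    have "(norm (c m - c n))^2 = inn (c m - c n) (c m - c n)" by (simp add: inn_self)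
    also have "\<dots> = inn (c m) (c m) - inn (c m) (c n) - inn (c n) (c m) + inn (c n) (c n)"
      by (simp add: inn_diff_left inn_diff_right)
    also have "\<dots> = s (2 * m) + s (2 * n) - 2 * s (m + n)"
      unfolding inn_c mult_2 add.commute[of n m] by linarith
    finally show ?thesis .
  qed
  have "Cauchy c"
  proof (rule CauchyI)
    fix e :: real assume e: "0 < e"
    obtain N where N: "\<And>k. k \<ge> N \<Longrightarrow> \<bar>s k - L\<bar> < e^2 / 4"
      using LIMSEQ_D[OF L(1), of "e^2 / 4"] e by auto
    show "\<exists>M. \<forall>m\<ge>M. \<forall>n\<ge>M. norm (c m - c n) < e"
    proof (intro exI[of _ N] allI impI)
      fix m n assume "m \<ge> N" "n \<ge> N"
      then have "\<bar>s (2 * m) - L\<bar> < e^2 / 4" "\<bar>s (2 * n) - L\<bar> < e^2 / 4"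
        using N by simp_all
      then have "s (2 * m) - L < e^2 / 4" "s (2 * n) - L < e^2 / 4"
        by (meson abs_ge_self le_less_trans)+
      moreover have "L \<le> s (m + n)" by (rule L(2))
      moreover have "0 \<le> e^2" by simp
      ultimately have "(norm (c m - c n))^2 < e^2" unfolding dist_c by linarith
      then show "norm (c m - c n) < e" by (rule power_less_imp_less_base) (use e in simp)
    qed
  qed
  then show ?thesis unfolding c_def by (rule inn_complete)
qed

end

definition id_minus_sq :: "('v::real_normed_vector \<Rightarrow> 'v) \<Rightarrow> real \<Rightarrow> 'v \<Rightarrow> 'v" where
  "id_minus_sq A K x = x - (1 / K^2) *\<^sub>R A (A x)"

definition abs_op :: "('v::real_normed_vector \<Rightarrow> 'v) \<Rightarrow> real \<Rightarrow> 'v \<Rightarrow> 'v" where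
  "abs_op A K x = K *\<^sub>R (x - compl_sqrt (id_minus_sq A K) x)"

context real_hilbert
begin

context
  fixes A :: "'v \<Rightarrow> 'v" and K :: real
  assumes A_bounded_linear: "bounded_linear A"
    and A_selfadjoint: "\<And>x y. inn (A x) y = inn x (A y)"
    and K_pos: "K > 0" and A_bound: "\<And>x. norm (A x) \<le> K * norm x"
begin

lemma A_linear: "linear A"
  using A_bounded_linear bounded_linear.linear by blast

lemma bounded_linear_id_minus_sq: "bounded_linear (id_minus_sq A K)"
  unfolding id_minus_sq_def[abs_def]
  by (intro bounded_linear_sub bounded_linear_ident bounded_linear_compose[OF bounded_linear_scaleR_right]
      bounded_linear_compose[OF A_bounded_linear] A_bounded_linear)

lemma id_minus_sq_selfadjoint: "inn (id_minus_sq A K x) y = inn x (id_minus_sq A K y)"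
  using A_selfadjoint[of "A x" y] A_selfadjoint[of x "A y"]
  unfolding id_minus_sq_def by (simp add: inn_diff_left inn_diff_right inn_scaleR_left inn_scaleR_right)

lemma inn_A_A: "inn (A (A x)) x = (norm (A x))^2"
  using A_selfadjoint[of "A x" x] by (simp add: inn_self)

lemma norm_id_minus_sq_squared: "(norm (id_minus_sq A K x))^2 \<le> (norm x)^2 - (norm (A x))^2 / K^2"
proof -
  define k where "k = 1 / K^2"
  define a where "a = A (A x)"
  have "(norm (id_minus_sq A K x))^2 = inn (x - k *\<^sub>R a) (x - k *\<^sub>R a)"
    unfolding id_minus_sq_def k_def a_def by (simp add: inn_self)
  also have "\<dots> = inn x x - 2 * k * inn a x + k^2 * inn a a"
    using inn_commute[of x a]
    by (simp add: inn_diff_left inn_diff_right inn_scaleR_left inn_scaleR_right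
        power2_eq_square algebra_simps)
  also have "\<dots> = (norm x)^2 - 2 * k * (norm (A x))^2 + k^2 * (norm a)^2"
    unfolding a_def inn_A_A by (simp add: inn_self)
  also have "\<dots> \<le> (norm x)^2 - 2 * k * (norm (A x))^2 + k^2 * (K^2 * (norm (A x))^2)"
  proof -
    have "norm a \<le> K * norm (A x)" unfolding a_def by (rule A_bound)
    then have "(norm a)^2 \<le> (K * norm (A x))^2" by (intro power_mono) auto
    then show ?thesis by (simp add: power_mult_distrib mult_left_mono)
  qed
  also have "\<dots> = (norm x)^2 - (norm (A x))^2 / K^2"
    unfolding k_def using K_pos by (simp add: field_simps power2_eq_square)
  finally show ?thesis .
qed

lemma id_minus_sq_contraction: "norm (id_minus_sq A K x) \<le> norm x"
proof -
  have "(norm (A x))^2 / K^2 \<ge> 0" by simp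
  then have "(norm (id_minus_sq A K x))^2 \<le> (norm x)^2"
    using norm_id_minus_sq_squared[of x] by linarith
  then show ?thesis by (rule power2_le_imp_le) simp
qed

lemma id_minus_sq_positive: "0 \<le> inn (id_minus_sq A K x) x"
proof -
  have "(norm (A x))^2 \<le> (K * norm x)^2" using A_bound[of x] by (intro power_mono) auto
  then have "(norm (A x))^2 / K^2 \<le> (norm x)^2"
    using K_pos by (simp add: pos_divide_le_eq power_mult_distrib mult.commute)
  moreover have "inn (id_minus_sq A K x) x = (norm x)^2 - (norm (A x))^2 / K^2"
    unfolding id_minus_sq_def by (simp add: inn_diff_left inn_scaleR_left inn_A_A inn_self)
  ultimately show ?thesis by simp
qed

lemma id_minus_sq_commute:
  assumes L: "linear L" and c: "\<And>x. L (A x) = A (L x)"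
  shows "L (id_minus_sq A K x) = id_minus_sq A K (L x)"
  unfolding id_minus_sq_def using c by (simp add: linear_diff[OF L] linear_scale[OF L])

lemmas id_minus_sq_positive_contraction =
  bounded_linear_id_minus_sq id_minus_sq_selfadjoint id_minus_sq_positive id_minus_sq_contraction

lemma bounded_linear_abs_op: "bounded_linear (abs_op A K)"
  unfolding abs_op_def[abs_def]
  by (intro bounded_linear_compose[OF bounded_linear_scaleR_right] bounded_linear_sub
      bounded_linear_ident bounded_linear_compl_sqrt[OF id_minus_sq_positive_contraction])

lemma linear_abs_op: "linear (abs_op A K)"
  using bounded_linear_abs_op bounded_linear.linear by blast

lemma abs_op_selfadjoint: "inn (abs_op A K x) y = inn x (abs_op A K y)"
  unfolding abs_op_def
  using compl_sqrt_selfadjoint[OF id_minus_sq_positive_contraction, of x y]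
  by (simp add: inn_scaleR_left inn_scaleR_right inn_diff_left inn_diff_right)

lemma abs_op_positive: "0 \<le> inn (abs_op A K x) x"
proof -
  have "inn (abs_op A K x) x = K * ((norm x)^2 - inn (compl_sqrt (id_minus_sq A K) x) x)"
    unfolding abs_op_def by (simp add: inn_scaleR_left inn_diff_left inn_self)
  then show ?thesis
    using inn_compl_sqrt_le[OF id_minus_sq_positive_contraction, of x] K_pos by simp
qed

lemma abs_op_commute:
  assumes L: "bounded_linear L" and c: "\<And>x. L (A x) = A (L x)"
  shows "L (abs_op A K x) = abs_op A K (L x)"
proof -
  have l: "linear L" using L bounded_linear.linear by blast
  have "L (compl_sqrt (id_minus_sq A K) x) = compl_sqrt (id_minus_sq A K) (L x)"
    using compl_sqrt_commute[OF id_minus_sq_positive_contraction L] id_minus_sq_commute[OF l c]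
    by blast
  then show ?thesis unfolding abs_op_def by (simp add: linear_diff[OF l] linear_scale[OF l])
qed

lemma abs_op_commute_self: "abs_op A K (A x) = A (abs_op A K x)"
  using abs_op_commute[OF A_bounded_linear, of x] by simp

text \<open>Writing \<open>Z\<close> for \<open>compl_sqrt (1 - A\<^sup>2/K\<^sup>2)\<close>, the fixed point equation
  \<open>2Z = 1 - A\<^sup>2/K\<^sup>2 + Z\<^sup>2\<close> says exactly \<open>(1 - Z)\<^sup>2 = A\<^sup>2/K\<^sup>2\<close>.\<close>

lemma abs_op_square: "abs_op A K (abs_op A K x) = A (A x)"
proof -
  define Z where "Z = compl_sqrt (id_minus_sq A K)"
  have Zl: "linear Z"
    unfolding Z_def using bounded_linear_compl_sqrt[OF id_minus_sq_positive_contraction]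
    by (rule bounded_linear.linear)
  have "Z x = (1/2) *\<^sub>R (id_minus_sq A K x + Z (Z x))"
    unfolding Z_def by (rule compl_sqrt_fixed_point[OF id_minus_sq_positive_contraction])
  then have "2 *\<^sub>R Z x = 2 *\<^sub>R ((1/2) *\<^sub>R (id_minus_sq A K x + Z (Z x)))" by (rule arg_cong)
  then have fixed: "Z x + Z x = id_minus_sq A K x + Z (Z x)" by (simp add: scaleR_2)
  have "abs_op A K (abs_op A K x) = K *\<^sub>R (K *\<^sub>R (x - Z x) - Z (K *\<^sub>R (x - Z x)))"
    unfolding abs_op_def Z_def by simp
  also have "\<dots> = (K * K) *\<^sub>R (x - (Z x + Z x) + Z (Z x))"
    by (simp add: linear_scale[OF Zl] linear_diff[OF Zl] algebra_simps)
  also have "x - (Z x + Z x) + Z (Z x) = x - id_minus_sq A K x" using fixed by simp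
  also have "\<dots> = (1 / K^2) *\<^sub>R A (A x)" unfolding id_minus_sq_def by simp
  finally show ?thesis using K_pos by (simp add: power2_eq_square)
qed

lemma norm_abs_op: "norm (abs_op A K x) = norm (A x)"
proof -
  have "(norm (abs_op A K x))^2 = inn (abs_op A K (abs_op A K x)) x"
    using abs_op_selfadjoint[of "abs_op A K x" x] by (simp add: inn_self inn_commute[of x])
  also have "\<dots> = (norm (A x))^2" unfolding abs_op_square by (rule inn_A_A)
  finally show ?thesis using power2_eq_imp_eq by (metis norm_ge_zero)
qed

text \<open>Cauchy--Schwarz for the positive \<open>|A|\<close> at \<open>A y\<close> and \<open>|A| y\<close>, together with
  \<open>A\<^sup>2 = |A|\<^sup>2\<close> and \<open>A |A| = |A| A\<close>, gives \<open>\<langle>A |A| y, |A| y\<rangle>\<^sup>2 \<le> \<langle>|A|\<^sup>2 y, |A| y\<rangle>\<^sup>2\<close>.\<close>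

lemma abs_op_dominates_on_range:
  "\<bar>inn (A (abs_op A K y)) (abs_op A K y)\<bar> \<le> inn (abs_op A K (abs_op A K y)) (abs_op A K y)"
proof -
  define R where "R = abs_op A K"
  have Rs: "\<And>a b. inn (R a) b = inn a (R b)" unfolding R_def by (rule abs_op_selfadjoint)
  have Rp: "\<And>a. 0 \<le> inn (R a) a" unfolding R_def by (rule abs_op_positive)
  have RA: "\<And>a. R (A a) = A (R a)" unfolding R_def by (rule abs_op_commute_self)
  have "inn (R (A y)) (A y) = inn (A (R (A y))) y" using A_selfadjoint[of "R (A y)" y] by simp
  also have "A (R (A y)) = R (R (R y))"
    using RA[of y] abs_op_square[of "abs_op A K y"] unfolding R_def by simp
  also have "inn (R (R (R y))) y = inn (R (R y)) (R y)" by (rule Rs)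
  finally have AR: "inn (R (A y)) (A y) = inn (R (R y)) (R y)" .
  have "(inn (A (R y)) (R y))^2 = (inn (R (A y)) (R y))^2" unfolding RA ..
  also have "\<dots> \<le> inn (R (A y)) (A y) * inn (R (R y)) (R y)"
    using positive_operator_Cauchy_Schwarz[OF linear_abs_op[folded R_def] Rs Rp] .
  also have "\<dots> = (inn (R (R y)) (R y))^2" unfolding AR by (simp add: power2_eq_square)
  finally have "\<bar>inn (A (R y)) (R y)\<bar> \<le> \<bar>inn (R (R y)) (R y)\<bar>" using abs_le_square_iff by blast
  then show ?thesis using Rp[of "R y"] unfolding R_def by simp
qed

lemma id_minus_sq_even_power_residual: "\<exists>w. x - (id_minus_sq A K ^^ (2 * n)) x = A (A w)"
proof (induction n)
  case 0 then show ?case by (intro exI[of _ 0]) (simp add: linear_0[OF A_linear])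
next
  case (Suc n)
  define k where "k = 1 / K^2"
  define c where "c = (id_minus_sq A K ^^ (2 * n)) x"
  obtain w where w: "x - c = A (A w)" using Suc unfolding c_def by blast
  have Y: "id_minus_sq A K z = z - k *\<^sub>R A (A z)" for z unfolding id_minus_sq_def k_def ..
  have "x - (id_minus_sq A K ^^ (2 * Suc n)) x = (x - c) + (c - id_minus_sq A K (id_minus_sq A K c))"
    unfolding c_def by (simp add: funpow_swap1)
  also have "c - id_minus_sq A K (id_minus_sq A K c) = A (A ((2 * k) *\<^sub>R c - (k * k) *\<^sub>R A (A c)))"
  proof -
    have double: "(k * 2) *\<^sub>R a = k *\<^sub>R a + k *\<^sub>R a" for a :: 'v
      using scaleR_left_distrib[of k k a] by (simp add: mult_2_right)
    show ?thesis unfolding Y using A_linear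
      by (simp add: linear_diff linear_scale linear_add algebra_simps scaleR_2 double)
  qed
  finally have "x - (id_minus_sq A K ^^ (2 * Suc n)) x
      = A (A (w + ((2 * k) *\<^sub>R c - (k * k) *\<^sub>R A (A c))))"
    using w A_linear by (simp add: linear_add)
  then show ?case by blast
qed

lemma id_minus_sq_fixed_kernel:
  assumes "id_minus_sq A K (id_minus_sq A K v) = v"
  shows "A v = 0"
proof -
  have "norm v \<le> norm (id_minus_sq A K v)"
    using id_minus_sq_contraction[of "id_minus_sq A K v"] assms by simp
  then have "(norm v)^2 \<le> (norm (id_minus_sq A K v))^2" by (intro power_mono) auto
  also have "\<dots> \<le> (norm v)^2 - (norm (A v))^2 / K^2" by (rule norm_id_minus_sq_squared)
  finally have "(norm (A v))^2 / K^2 \<le> 0" by simp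
  then show ?thesis using K_pos by (simp add: divide_le_0_iff)
qed

text \<open>Write \<open>x = (x - v) + v\<close> with \<open>v = lim (1 - A\<^sup>2/K\<^sup>2)\<^sup>2\<^sup>n x\<close>: then \<open>A v = 0\<close>, and
  \<open>x - v\<close> is a limit of vectors \<open>A\<^sup>2 w = |A| (|A| w)\<close> in the range of \<open>|A|\<close>.\<close>

lemma abs_op_dominates: "\<bar>inn (A x) x\<bar> \<le> inn (abs_op A K x) x"
proof -
  define Y where "Y = id_minus_sq A K"
  define R where "R = abs_op A K"
  define c where "c n = (Y ^^ (2 * n)) x" for n
  define g where "g z = inn (R z) z - \<bar>inn (A z) z\<bar>" for z
  obtain v where v: "c \<longlonglongrightarrow> v"
    using even_powers_convergent[OF id_minus_sq_selfadjoint id_minus_sq_contraction]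
    unfolding c_def Y_def convergent_def by blast
  have "Y (Y v) = v"
  proof (rule LIMSEQ_unique)
    show "(\<lambda>n. c (Suc n)) \<longlonglongrightarrow> v" by (rule LIMSEQ_Suc[OF v])
    have "(\<lambda>n. Y (Y (c n))) \<longlonglongrightarrow> Y (Y v)"
      unfolding Y_def by (intro bounded_linear.tendsto[OF bounded_linear_id_minus_sq] v)
    then show "(\<lambda>n. c (Suc n)) \<longlonglongrightarrow> Y (Y v)" unfolding c_def by (simp add: funpow_swap1)
  qed
  then have Av: "A v = 0" unfolding Y_def by (rule id_minus_sq_fixed_kernel)
  then have Rv: "R v = 0" using norm_abs_op[of v] unfolding R_def by simp
  have "0 \<le> g (x - c n)" for n
  proof -
    obtain w where "x - c n = A (A w)"
      using id_minus_sq_even_power_residual unfolding c_def Y_def by blast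
    then have "x - c n = R (R w)" unfolding R_def abs_op_square .
    then show ?thesis unfolding g_def R_def using abs_op_dominates_on_range[of "abs_op A K w"] by simp
  qed
  moreover have "(\<lambda>n. g (x - c n)) \<longlonglongrightarrow> g (x - v)"
    unfolding g_def R_def
    by (intro tendsto_diff tendsto_rabs tendsto_inn tendsto_const v
        bounded_linear.tendsto[OF bounded_linear_abs_op] bounded_linear.tendsto[OF A_bounded_linear])
  ultimately have "0 \<le> g (x - v)" by (intro LIMSEQ_le_const) auto
  also have "g (x - v) = g x"
    unfolding g_def R_def
    using quadratic_form_diff_kernel[OF A_linear A_selfadjoint Av]
      quadratic_form_diff_kernel[OF linear_abs_op abs_op_selfadjoint Rv[unfolded R_def]] by simp
  finally show ?thesis unfolding g_def R_def by simp
qed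

end

lemma selfadjoint_positive_decomposition:
  assumes A_bounded_linear: "bounded_linear A" and A_selfadjoint: "\<And>x y. inn (A x) y = inn x (A y)"
  obtains P Q where "bounded_linear P" "bounded_linear Q"
    "\<And>x y. inn (P x) y = inn x (P y)" "\<And>x y. inn (Q x) y = inn x (Q y)"
    "\<And>x. 0 \<le> inn (P x) x" "\<And>x. 0 \<le> inn (Q x) x" "\<And>x. P x - Q x = A x"
    "\<And>x. norm (P x) \<le> norm (A x)" "\<And>x. norm (Q x) \<le> norm (A x)"
    "\<And>L x. bounded_linear L \<Longrightarrow> (\<And>x. L (A x) = A (L x)) \<Longrightarrow> L (P x) = P (L x) \<and> L (Q x) = Q (L x)"
proof -
  obtain K where K: "K > 0" "\<And>x. norm (A x) \<le> norm x * K"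
    using bounded_linear.pos_bounded[OF A_bounded_linear] by blast
  note abs_facts = A_bounded_linear A_selfadjoint K(1) K(2)[unfolded mult.commute[of "norm _"]]
  define R where "R = abs_op A K"
  have R_bounded_linear: "bounded_linear R" unfolding R_def by (rule bounded_linear_abs_op[OF abs_facts])
  have R_selfadjoint: "inn (R x) y = inn x (R y)" for x y
    unfolding R_def by (rule abs_op_selfadjoint[OF abs_facts])
  have R_dominates: "\<bar>inn (A x) x\<bar> \<le> inn (R x) x" for x
    unfolding R_def by (rule abs_op_dominates[OF abs_facts])
  have norm_R: "norm (R x) = norm (A x)" for x unfolding R_def by (rule norm_abs_op[OF abs_facts])
  show thesis
  proof (rule that[of "\<lambda>x. (1/2) *\<^sub>R (R x + A x)" "\<lambda>x. (1/2) *\<^sub>R (R x - A x)"])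
    show "bounded_linear (\<lambda>x. (1/2) *\<^sub>R (R x + A x))" "bounded_linear (\<lambda>x. (1/2) *\<^sub>R (R x - A x))"
      by (intro bounded_linear_compose[OF bounded_linear_scaleR_right] bounded_linear_add
          bounded_linear_sub R_bounded_linear A_bounded_linear)+
    show "inn ((1/2) *\<^sub>R (R x + A x)) y = inn x ((1/2) *\<^sub>R (R y + A y))"
      "inn ((1/2) *\<^sub>R (R x - A x)) y = inn x ((1/2) *\<^sub>R (R y - A y))" for x y
      using R_selfadjoint[of x y] A_selfadjoint[of x y] by (simp_all add: inn_simps)
    show "0 \<le> inn ((1/2) *\<^sub>R (R x + A x)) x" "0 \<le> inn ((1/2) *\<^sub>R (R x - A x)) x" for x
      using R_dominates[of x] by (simp_all add: inn_simps)
    show "(1/2) *\<^sub>R (R x + A x) - (1/2) *\<^sub>R (R x - A x) = A x" for x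
      by (simp add: algebra_simps flip: scaleR_2)
    show "norm ((1/2) *\<^sub>R (R x + A x)) \<le> norm (A x)" "norm ((1/2) *\<^sub>R (R x - A x)) \<le> norm (A x)" for x
      using norm_triangle_ineq[of "R x" "A x"] norm_triangle_ineq4[of "R x" "A x"] norm_R[of x]
      by simp_all
    show "L ((1/2) *\<^sub>R (R x + A x)) = (1/2) *\<^sub>R (R (L x) + A (L x))
        \<and> L ((1/2) *\<^sub>R (R x - A x)) = (1/2) *\<^sub>R (R (L x) - A (L x))"
      if L: "bounded_linear L" and commute: "\<And>x. L (A x) = A (L x)" for L x
    proof -
      have "linear L" using L bounded_linear.linear by blast
      moreover have "L (R x) = R (L x)" unfolding R_def by (rule abs_op_commute[OF abs_facts L commute])
      ultimately show ?thesis by (simp add: linear_add linear_diff linear_scale commute)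
    qed
  qed
qed

end

lemma quadratic_form_injectivity_equivalences:
  fixes HS SA Pos :: "('v::ab_group_add \<Rightarrow> 'v) \<Rightarrow> bool" and q :: "('v \<Rightarrow> 'v) \<Rightarrow> 'v \<Rightarrow> 'f::ab_group_add"
    and x :: "nat \<Rightarrow> 'v"
  assumes diff_closed: "\<And>T S. HS T \<Longrightarrow> SA T \<Longrightarrow> HS S \<Longrightarrow> SA S
      \<Longrightarrow> HS (\<lambda>v. T v - S v) \<and> SA (\<lambda>v. T v - S v)"
    and q_diff: "\<And>T S v. q (\<lambda>v. T v - S v) v = q T v - q S v"
    and decomposition: "\<And>A. HS A \<Longrightarrow> SA A \<Longrightarrow> \<exists>P Q. HS P \<and> Pos P \<and> SA P \<and>
      HS Q \<and> Pos Q \<and> SA Q \<and> (\<forall>v. P v - Q v = A v)"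
  shows "((\<forall>T S. HS T \<and> Pos T \<and> SA T \<and> HS S \<and> Pos S \<and> SA S \<and>
             (\<forall>k. q T (x k) = q S (x k)) \<longrightarrow> T = S)
      \<longleftrightarrow> (\<forall>T S. HS T \<and> SA T \<and> HS S \<and> SA S \<and> (\<forall>k. q T (x k) = q S (x k)) \<longrightarrow> T = S))
    \<and> ((\<forall>T S. HS T \<and> SA T \<and> HS S \<and> SA S \<and> (\<forall>k. q T (x k) = q S (x k)) \<longrightarrow> T = S)
      \<longleftrightarrow> (\<forall>T. HS T \<and> SA T \<and> (\<forall>k. q T (x k) = 0) \<longrightarrow> T = (\<lambda>_. 0)))"
    (is "(?positive \<longleftrightarrow> ?selfadjoint) \<and> (_ \<longleftrightarrow> ?injective)")
proof -
  have "?selfadjoint" if ?injective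
  proof (intro allI impI)
    fix T S assume TS: "HS T \<and> SA T \<and> HS S \<and> SA S \<and> (\<forall>k. q T (x k) = q S (x k))"
    have "HS (\<lambda>v. T v - S v) \<and> SA (\<lambda>v. T v - S v)" using diff_closed TS by blast
    moreover have "\<forall>k. q (\<lambda>v. T v - S v) (x k) = 0" unfolding q_diff using TS by simp
    ultimately have "(\<lambda>v. T v - S v) = (\<lambda>_. 0)" using that by blast
    then show "T = S" by (simp add: fun_eq_iff)
  qed
  moreover have ?injective if ?selfadjoint
  proof (intro allI impI)
    fix T assume T: "HS T \<and> SA T \<and> (\<forall>k. q T (x k) = 0)"
    have "HS (\<lambda>v. T v - T v) \<and> SA (\<lambda>v. T v - T v)" using diff_closed T by blast
    moreover have "\<forall>k. q T (x k) = q (\<lambda>v. T v - T v) (x k)" unfolding q_diff using T by simp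
    ultimately have "T = (\<lambda>v. T v - T v)" using that T by blast
    then show "T = (\<lambda>_. 0)" by simp
  qed
  moreover have ?selfadjoint if ?positive
  proof (intro allI impI)
    fix T S assume TS: "HS T \<and> SA T \<and> HS S \<and> SA S \<and> (\<forall>k. q T (x k) = q S (x k))"
    define A where "A = (\<lambda>v. T v - S v)"
    have "HS A" "SA A" using diff_closed TS unfolding A_def by blast+
    then obtain P Q where PQ: "HS P \<and> Pos P \<and> SA P \<and> HS Q \<and> Pos Q \<and> SA Q"
      and A: "\<forall>v. P v - Q v = A v"
      using decomposition by blast
    have "(\<lambda>v. P v - Q v) = A" using A by (simp add: fun_eq_iff)
    then have "q P (x k) - q Q (x k) = q T (x k) - q S (x k)" for k
      unfolding q_diff[symmetric] A_def by simp
    then have "\<forall>k. q P (x k) = q Q (x k)" using TS by simp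
    then have "P = Q" using that PQ by blast
    then have "A = (\<lambda>_. 0)" using A by (simp add: fun_eq_iff)
    then show "T = S" unfolding A_def by (simp add: fun_eq_iff)
  qed
  ultimately show ?thesis by blast
qed

interpretation real_inner_hilbert: real_hilbert "inner :: 'a::{real_inner,complete_space} \<Rightarrow> 'a \<Rightarrow> real"
  by unfold_locales (auto simp: inner_add_left inner_add_right inner_commute power2_norm_eq_inner
      Cauchy_convergent)

lemma r_hilbert_schmidt_iff:
  "r_hilbert_schmidt (T :: 'a::{real_inner,complete_space} \<Rightarrow> 'a) \<longleftrightarrow> bounded_linear T \<and>
     (\<exists>B. real_inner_hilbert.orthonormal_basis B \<and> (\<lambda>b. (norm (T b))^2) summable_on B)"
  unfolding r_hilbert_schmidt_def r_orthonormal_basis_def real_inner_hilbert.orthonormal_basis_def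
    real_inner_hilbert.orthonormal_def
  by (simp add: norm_eq_1)

lemma r_hilbert_schmidt_selfadjoint_diff:
  fixes T S :: "'a::{real_inner,complete_space} \<Rightarrow> 'a"
  assumes T: "r_hilbert_schmidt T" "r_selfadjoint T" and S: "r_hilbert_schmidt S" "r_selfadjoint S"
  shows "r_hilbert_schmidt (\<lambda>v. T v - S v) \<and> r_selfadjoint (\<lambda>v. T v - S v)"
proof
  obtain B1 where B1: "real_inner_hilbert.orthonormal_basis B1" "(\<lambda>b. (norm (T b))^2) summable_on B1"
    using T(1) r_hilbert_schmidt_iff by blast
  obtain B2 where B2: "real_inner_hilbert.orthonormal_basis B2" "(\<lambda>b. (norm (S b))^2) summable_on B2"
    using S(1) r_hilbert_schmidt_iff by blast
  have "(\<lambda>b. (norm (S b))^2) summable_on B1"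
    using real_inner_hilbert.Hilbert_Schmidt_summable_basis_independent[OF B1(1) B2(1) _ B2(2)] S(2)
    unfolding r_selfadjoint_def by blast
  then have "(\<lambda>b. (norm (T b - S b))^2) summable_on B1"
    using summable_on_power2_norm_diff B1(2) by blast
  moreover have "bounded_linear (\<lambda>v. T v - S v)"
    using T(2) S(2) unfolding r_selfadjoint_def by (simp add: bounded_linear_sub)
  ultimately show "r_hilbert_schmidt (\<lambda>v. T v - S v)" using B1(1) r_hilbert_schmidt_iff by blast
  show "r_selfadjoint (\<lambda>v. T v - S v)"
    using T(2) S(2) unfolding r_selfadjoint_def
    by (simp add: bounded_linear_sub inner_diff_left inner_diff_right)
qed

lemma r_hilbert_schmidt_positive_decomposition:
  fixes A :: "'a::{real_inner,complete_space} \<Rightarrow> 'a"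
  assumes "r_hilbert_schmidt A" "r_selfadjoint A"
  shows "\<exists>P Q. r_hilbert_schmidt P \<and> r_positive P \<and> r_selfadjoint P \<and>
    r_hilbert_schmidt Q \<and> r_positive Q \<and> r_selfadjoint Q \<and> (\<forall>v. P v - Q v = A v)"
proof -
  obtain B where B: "real_inner_hilbert.orthonormal_basis B" "(\<lambda>b. (norm (A b))^2) summable_on B"
    using assms(1) r_hilbert_schmidt_iff by blast
  have A: "bounded_linear A" "\<And>x y. A x \<bullet> y = x \<bullet> A y"
    using assms(2) unfolding r_selfadjoint_def by auto
  show ?thesis
  proof (rule real_inner_hilbert.selfadjoint_positive_decomposition[OF A])
    fix P Q
    assume P: "bounded_linear P" and Q: "bounded_linear Q"
      and sa: "\<And>x y. P x \<bullet> y = x \<bullet> P y" "\<And>x y. Q x \<bullet> y = x \<bullet> Q y"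
      and pos: "\<And>x. 0 \<le> P x \<bullet> x" "\<And>x. 0 \<le> Q x \<bullet> x" and PQ: "\<And>x. P x - Q x = A x"
      and norm_le: "\<And>x. norm (P x) \<le> norm (A x)" "\<And>x. norm (Q x) \<le> norm (A x)"
    have "r_hilbert_schmidt P" "r_hilbert_schmidt Q"
      unfolding r_hilbert_schmidt_iff
      using P Q B(1) summable_on_power2_norm_mono[OF B(2) norm_le(1)]
        summable_on_power2_norm_mono[OF B(2) norm_le(2)] by blast+
    moreover have "r_positive P" "r_positive Q" unfolding r_positive_def using pos by blast+
    moreover have "r_selfadjoint P" "r_selfadjoint Q" unfolding r_selfadjoint_def using P Q sa by blast+
    ultimately show ?thesis using PQ by blast
  qed
qed

text \<open>The complex case reduces to the real one: \<open>Re \<langle>x, y\<rangle>\<close> is a real inner product, a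
  complex orthonormal basis \<open>B\<close> yields the real orthonormal basis \<open>B \<union> i B\<close>, and complex
  linearity of \<open>P\<close> and \<open>Q\<close> comes from their commuting with every operator that commutes with
  \<open>A\<close>, in particular with multiplication by \<open>i\<close>.\<close>

locale complex_hilbert_space =
  fixes sc :: "complex \<Rightarrow> 'b::banach \<Rightarrow> 'b" and ip :: "'b \<Rightarrow> 'b \<Rightarrow> complex"
  assumes complex_hilbert: "complex_hilbert sc ip"
begin

lemma sc_of_real: "sc (complex_of_real r) x = r *\<^sub>R x"
  and sc_mult: "sc (a * b) x = sc a (sc b x)"
  and sc_add_right: "sc a (x + y) = sc a x + sc a y"
  and sc_add_left: "sc (a + b) x = sc a x + sc b x"
  and ip_add_left: "ip (x + y) z = ip x z + ip y z"
  and ip_sc_left: "ip (sc a x) y = a * ip x y"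
  and ip_cnj: "ip y x = cnj (ip x y)"
  and ip_self: "ip x x = complex_of_real ((norm x)^2)"
  using complex_hilbert unfolding complex_hilbert_def by blast+

lemma sc_one: "sc 1 x = x"
  using sc_of_real[of 1 x] by simp

lemma ip_scaleR_left: "ip (r *\<^sub>R x) y = r * ip x y"
  using ip_sc_left[of "complex_of_real r" x y] sc_of_real[of r x] by simp

lemma ip_sc_right: "ip x (sc a y) = cnj a * ip x y"
  using ip_cnj[of x "sc a y"] ip_sc_left[of a y x] ip_cnj[of x y] by simp

lemma ip_diff_left: "ip (x - y) z = ip x z - ip y z"
  using ip_add_left[of x "- y" z] ip_scaleR_left[of "-1" y z] by simp

sublocale re: real_hilbert "\<lambda>x y. Re (ip x y)"
proof
  show "Re (ip (x + y) z) = Re (ip x z) + Re (ip y z)" for x y z by (simp add: ip_add_left)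
  show "Re (ip (r *\<^sub>R x) y) = r * Re (ip x y)" for r x y by (simp add: ip_scaleR_left)
  show "Re (ip x y) = Re (ip y x)" for x y using ip_cnj[of x y] by simp
  show "Re (ip x x) = (norm x)^2" for x by (simp add: ip_self)
  show "Cauchy X \<Longrightarrow> convergent X" for X :: "nat \<Rightarrow> 'b" by (rule Cauchy_convergent)
qed

lemma norm_sc: "norm (sc a x) = cmod a * norm x"
proof -
  have "ip (sc a x) (sc a x) = (a * cnj a) * ip x x" by (simp add: ip_sc_left ip_sc_right)
  also have "\<dots> = complex_of_real ((cmod a * norm x)^2)"
    by (simp add: complex_norm_square[symmetric] ip_self power_mult_distrib)
  finally have "(norm (sc a x))^2 = (cmod a * norm x)^2" unfolding ip_self of_real_eq_iff .
  then show ?thesis by (simp add: power2_eq_iff_nonneg)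
qed

lemma bounded_linear_sc: "bounded_linear (sc a)"
proof (rule bounded_linear_intro[where K="cmod a"])
  show "sc a (x + y) = sc a x + sc a y" for x y by (rule sc_add_right)
  show "sc a (r *\<^sub>R x) = r *\<^sub>R sc a x" for r x
    using sc_mult[of a "complex_of_real r" x] sc_mult[of "complex_of_real r" a x]
    by (simp add: sc_of_real mult.commute)
  show "norm (sc a x) \<le> norm x * cmod a" for x by (simp add: norm_sc mult.commute)
qed

lemma c_selfadjoint_Re: "c_selfadjoint sc ip T \<Longrightarrow> Re (ip (T x) y) = Re (ip x (T y))"
  unfolding c_selfadjoint_def by simp

text \<open>\<open>Im \<langle>u, v\<rangle> = Re \<langle>u, i v\<rangle>\<close>, so for complex linear \<open>T\<close> the real part of the adjoint
  identity already gives the imaginary part.\<close>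

lemma c_selfadjoint_if_Re:
  assumes lin: "c_linear sc T" and Re_eq: "\<And>x y. Re (ip (T x) y) = Re (ip x (T y))"
  shows "c_selfadjoint sc ip T"
  unfolding c_selfadjoint_def
proof (intro conjI allI lin)
  fix x y
  have Ti: "T (sc \<i> y) = sc \<i> (T y)" using lin unfolding c_linear_def by blast
  have Im_ip: "Im (ip u v) = Re (ip u (sc \<i> v))" for u v by (simp add: ip_sc_right)
  show "ip (T x) y = ip x (T y)"
  proof (rule complex_eqI)
    show "Re (ip (T x) y) = Re (ip x (T y))" by (rule Re_eq)
    have "Im (ip (T x) y) = Re (ip x (T (sc \<i> y)))" unfolding Im_ip by (rule Re_eq)
    also have "\<dots> = Im (ip x (T y))" unfolding Ti Im_ip ..
    finally show "Im (ip (T x) y) = Im (ip x (T y))" .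
  qed
qed

lemma c_positive_iff_Re:
  assumes "c_selfadjoint sc ip T"
  shows "c_positive ip T \<longleftrightarrow> (\<forall>x. 0 \<le> Re (ip (T x) x))"
proof -
  have real: "ip (T x) x = complex_of_real (Re (ip (T x) x))" for x
  proof -
    have "ip (T x) x = cnj (ip (T x) x)"
      using assms ip_cnj[of "T x" x] unfolding c_selfadjoint_def by simp
    then have "Im (ip (T x) x) = 0" by (metis cnj.simps(2) complex_cnj_cancel_iff neg_equal_zero)
    then show ?thesis by (simp add: complex_eq_iff)
  qed
  show ?thesis unfolding c_positive_def
  proof (intro iffI allI)
    fix x assume "\<forall>x. \<exists>r\<ge>0. ip (T x) x = complex_of_real r"
    then obtain r where "r \<ge> 0" "ip (T x) x = complex_of_real r" by blast
    then show "0 \<le> Re (ip (T x) x)" by simp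
  next
    fix x assume "\<forall>x. 0 \<le> Re (ip (T x) x)"
    then show "\<exists>r\<ge>0. ip (T x) x = complex_of_real r" using real by blast
  qed
qed

lemma sc_eq_Re_Im: "sc z b = Re z *\<^sub>R b + Im z *\<^sub>R sc \<i> b"
proof -
  have "z = complex_of_real (Re z) + complex_of_real (Im z) * \<i>" by (simp add: complex_eq_iff)
  then have "sc z b = sc (complex_of_real (Re z) + complex_of_real (Im z) * \<i>) b"
    by (rule arg_cong)
  then show ?thesis by (simp only: sc_add_left sc_mult sc_of_real)
qed

lemma inj_on_sc_i: "inj_on (sc \<i>) A"
proof (rule inj_onI)
  fix u v assume "sc \<i> u = sc \<i> v"
  then have "sc (- \<i>) (sc \<i> u) = sc (- \<i>) (sc \<i> v)" by simp
  then show "u = v" by (simp add: sc_mult[symmetric] sc_one)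
qed

lemma orthonormal_basis_realification:
  assumes B: "c_orthonormal_basis sc ip B"
  shows "re.orthonormal_basis (B \<union> sc \<i> ` B)"
proof -
  have bb: "\<And>b. b \<in> B \<Longrightarrow> ip b b = 1"
    and bc: "\<And>b c. b \<in> B \<Longrightarrow> c \<in> B \<Longrightarrow> b \<noteq> c \<Longrightarrow> ip b c = 0"
    and cl: "closure (cspan sc B) = UNIV"
    using B by (simp_all add: c_orthonormal_basis_def)
  have ii: "ip (sc \<i> u) (sc \<i> w) = ip u w" for u w by (simp add: ip_sc_left ip_sc_right)
  have cross: "Re (ip b (sc \<i> c)) = 0" "Re (ip (sc \<i> c) b) = 0" if "b \<in> B" "c \<in> B" for b c
  proof -
    show "Re (ip b (sc \<i> c)) = 0"
      using bb[OF that(1)] bc[OF that] by (cases "b = c") (simp_all add: ip_sc_right)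
    then show "Re (ip (sc \<i> c) b) = 0" using ip_cnj[of "sc \<i> c" b] by simp
  qed
  have "re.orthonormal (B \<union> sc \<i> ` B)"
    unfolding re.orthonormal_def
  proof (intro conjI ballI impI)
    fix u assume "u \<in> B \<union> sc \<i> ` B"
    then show "Re (ip u u) = 1" using bb ii by auto
  next
    fix u w assume u: "u \<in> B \<union> sc \<i> ` B" and w: "w \<in> B \<union> sc \<i> ` B" and "u \<noteq> w"
    show "Re (ip u w) = 0"
    proof (cases "u \<in> B")
      case True
      show ?thesis
      proof (cases "w \<in> B")
        case True then show ?thesis using bc \<open>u \<in> B\<close> \<open>u \<noteq> w\<close> by simp
      next
        case False
        then obtain c where "c \<in> B" "w = sc \<i> c" using w by blast
        then show ?thesis using cross(1) \<open>u \<in> B\<close> by simp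
      qed
    next
      case False
      then obtain b where b: "b \<in> B" "u = sc \<i> b" using u by blast
      show ?thesis
      proof (cases "w \<in> B")
        case True then show ?thesis using cross(2) b by simp
      next
        case False
        then obtain c where c: "c \<in> B" "w = sc \<i> c" using w by blast
        then have "b \<noteq> c" using b \<open>u \<noteq> w\<close> by blast
        then show ?thesis using b c bc ii by simp
      qed
    qed
  qed
  moreover have "cspan sc B \<subseteq> span (B \<union> sc \<i> ` B)"
  proof
    fix v assume "v \<in> cspan sc B"
    then obtain F c where F: "finite F" "F \<subseteq> B" "v = (\<Sum>b\<in>F. sc (c b) b)"
      unfolding cspan_def by blast
    have "sc (c b) b \<in> span (B \<union> sc \<i> ` B)" if "b \<in> F" for b
    proof -
      have "b \<in> span (B \<union> sc \<i> ` B)" "sc \<i> b \<in> span (B \<union> sc \<i> ` B)"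
        using that F(2) by (auto intro: span_base)
      then show ?thesis by (subst sc_eq_Re_Im) (intro span_add span_scale)
    qed
    then show "v \<in> span (B \<union> sc \<i> ` B)" unfolding F(3) by (rule span_sum)
  qed
  then have "closure (cspan sc B) \<subseteq> closure (span (B \<union> sc \<i> ` B))" by (rule closure_mono)
  then have "closure (span (B \<union> sc \<i> ` B)) = UNIV" using cl by blast
  ultimately show ?thesis unfolding re.orthonormal_basis_def by blast
qed

lemma summable_on_realification:
  assumes "c_linear sc T" "(\<lambda>b. (norm (T b))^2) summable_on B"
  shows "(\<lambda>b. (norm (T b))^2) summable_on (B \<union> sc \<i> ` B)"
proof (rule summable_on_union[OF assms(2)])
  have "norm (T (sc \<i> b)) = norm (T b)" for b
    using assms(1) unfolding c_linear_def by (simp add: norm_sc)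
  then have "((\<lambda>b. (norm (T b))^2) \<circ> sc \<i>) summable_on B" using assms(2) by (simp add: o_def)
  then show "(\<lambda>b. (norm (T b))^2) summable_on (sc \<i> ` B)"
    by (simp add: summable_on_reindex[OF inj_on_sc_i])
qed

lemma c_linear_diff: "c_linear sc T \<Longrightarrow> c_linear sc S \<Longrightarrow> c_linear sc (\<lambda>v. T v - S v)"
  unfolding c_linear_def
  by (simp add: bounded_linear_sub linear_diff[OF bounded_linear.linear[OF bounded_linear_sc]])

lemma c_hilbert_schmidt_selfadjoint_diff:
  assumes T: "c_hilbert_schmidt sc ip T" "c_selfadjoint sc ip T"
    and S: "c_hilbert_schmidt sc ip S" "c_selfadjoint sc ip S"
  shows "c_hilbert_schmidt sc ip (\<lambda>v. T v - S v) \<and> c_selfadjoint sc ip (\<lambda>v. T v - S v)"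
proof
  obtain B1 where B1: "c_orthonormal_basis sc ip B1" "(\<lambda>b. (norm (T b))^2) summable_on B1"
    using T(1) unfolding c_hilbert_schmidt_def by blast
  obtain B2 where B2: "c_orthonormal_basis sc ip B2" "(\<lambda>b. (norm (S b))^2) summable_on B2"
    using S(1) unfolding c_hilbert_schmidt_def by blast
  have lin: "c_linear sc T" "c_linear sc S" using T(1) S(1) unfolding c_hilbert_schmidt_def by blast+
  have "(\<lambda>b. (norm (S b))^2) summable_on (B1 \<union> sc \<i> ` B1)"
    by (rule re.Hilbert_Schmidt_summable_basis_independent[OF orthonormal_basis_realification[OF B1(1)]
          orthonormal_basis_realification[OF B2(1)] c_selfadjoint_Re[OF S(2)]
          summable_on_realification[OF lin(2) B2(2)]])
  then have "(\<lambda>b. (norm (S b))^2) summable_on B1" by (rule summable_on_subset) blast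
  then have "(\<lambda>b. (norm (T b - S b))^2) summable_on B1" using summable_on_power2_norm_diff B1(2) by blast
  then show "c_hilbert_schmidt sc ip (\<lambda>v. T v - S v)"
    unfolding c_hilbert_schmidt_def using B1(1) c_linear_diff[OF lin] by blast
  show "c_selfadjoint sc ip (\<lambda>v. T v - S v)"
  proof (rule c_selfadjoint_if_Re)
    show "c_linear sc (\<lambda>v. T v - S v)" by (rule c_linear_diff[OF lin])
    show "Re (ip (T x - S x) y) = Re (ip x (T y - S y))" for x y
      using c_selfadjoint_Re[OF T(2), of x y] c_selfadjoint_Re[OF S(2), of x y]
      by (simp add: re.inn_diff_left re.inn_diff_right)
  qed
qed

lemma c_hilbert_schmidt_positive_decomposition:
  assumes "c_hilbert_schmidt sc ip A" "c_selfadjoint sc ip A"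
  shows "\<exists>P Q. c_hilbert_schmidt sc ip P \<and> c_positive ip P \<and> c_selfadjoint sc ip P \<and>
    c_hilbert_schmidt sc ip Q \<and> c_positive ip Q \<and> c_selfadjoint sc ip Q \<and> (\<forall>v. P v - Q v = A v)"
proof -
  obtain B where B: "c_orthonormal_basis sc ip B" "(\<lambda>b. (norm (A b))^2) summable_on B"
    using assms(1) unfolding c_hilbert_schmidt_def by blast
  have A: "bounded_linear A" "\<And>a v. A (sc a v) = sc a (A v)"
    using assms(2) unfolding c_selfadjoint_def c_linear_def by blast+
  show ?thesis
  proof (rule re.selfadjoint_positive_decomposition[OF A(1) c_selfadjoint_Re[OF assms(2)]])
    fix P Q
    assume P: "bounded_linear P" "\<And>x y. Re (ip (P x) y) = Re (ip x (P y))"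
        "\<And>x. 0 \<le> Re (ip (P x) x)" "\<And>x. norm (P x) \<le> norm (A x)"
      and Q: "bounded_linear Q" "\<And>x y. Re (ip (Q x) y) = Re (ip x (Q y))"
        "\<And>x. 0 \<le> Re (ip (Q x) x)" "\<And>x. norm (Q x) \<le> norm (A x)"
      and PQ: "\<And>x. P x - Q x = A x"
      and commute: "\<And>L x. bounded_linear L \<Longrightarrow> (\<And>x. L (A x) = A (L x))
        \<Longrightarrow> L (P x) = P (L x) \<and> L (Q x) = Q (L x)"
    have "sc a (P v) = P (sc a v) \<and> sc a (Q v) = Q (sc a v)" for a v
      using commute[OF bounded_linear_sc] A(2) by simp
    then have lin: "c_linear sc P" "c_linear sc Q" unfolding c_linear_def using P(1) Q(1) by simp_all
    have sa: "c_selfadjoint sc ip P" "c_selfadjoint sc ip Q"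
      using c_selfadjoint_if_Re[OF lin(1) P(2)] c_selfadjoint_if_Re[OF lin(2) Q(2)] by blast+
    have "c_positive ip P" "c_positive ip Q"
      using c_positive_iff_Re[OF sa(1)] c_positive_iff_Re[OF sa(2)] P(3) Q(3) by simp_all
    moreover have "c_hilbert_schmidt sc ip P" "c_hilbert_schmidt sc ip Q"
      unfolding c_hilbert_schmidt_def
      using lin B(1) summable_on_power2_norm_mono[OF B(2) P(4)] summable_on_power2_norm_mono[OF B(2) Q(4)]
      by auto
    ultimately show ?thesis using sa PQ by (intro exI[of _ P] exI[of _ Q]) simp
  qed
qed

end

theorem mainTheorem9:
  fixes x :: "nat \<Rightarrow> 'a::{real_inner, complete_space}"
    and sc :: "complex \<Rightarrow> 'b::banach \<Rightarrow> 'b"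
    and ip :: "'b \<Rightarrow> 'b \<Rightarrow> complex"
    and y :: "nat \<Rightarrow> 'b"
  shows
   "(((\<forall>T S. r_hilbert_schmidt T \<and> r_positive T \<and> r_selfadjoint T \<and>
             r_hilbert_schmidt S \<and> r_positive S \<and> r_selfadjoint S \<and>
             (\<forall>k. T (x k) \<bullet> x k = S (x k) \<bullet> x k) \<longrightarrow> T = S)
      \<longleftrightarrow>
      (\<forall>T S. r_hilbert_schmidt T \<and> r_selfadjoint T \<and>
             r_hilbert_schmidt S \<and> r_selfadjoint S \<and>
             (\<forall>k. T (x k) \<bullet> x k = S (x k) \<bullet> x k) \<longrightarrow> T = S))
     \<and>
     ((\<forall>T S. r_hilbert_schmidt T \<and> r_selfadjoint T \<and>
             r_hilbert_schmidt S \<and> r_selfadjoint S \<and>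
             (\<forall>k. T (x k) \<bullet> x k = S (x k) \<bullet> x k) \<longrightarrow> T = S)
      \<longleftrightarrow> r_injective_family x))
    \<and>
    (complex_hilbert sc ip \<longrightarrow>
     (((\<forall>T S. c_hilbert_schmidt sc ip T \<and> c_positive ip T \<and> c_selfadjoint sc ip T \<and>
             c_hilbert_schmidt sc ip S \<and> c_positive ip S \<and> c_selfadjoint sc ip S \<and>
             (\<forall>k. ip (T (y k)) (y k) = ip (S (y k)) (y k)) \<longrightarrow> T = S)
      \<longleftrightarrow>
      (\<forall>T S. c_hilbert_schmidt sc ip T \<and> c_selfadjoint sc ip T \<and>
             c_hilbert_schmidt sc ip S \<and> c_selfadjoint sc ip S \<and>
             (\<forall>k. ip (T (y k)) (y k) = ip (S (y k)) (y k)) \<longrightarrow> T = S))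
     \<and>
     ((\<forall>T S. c_hilbert_schmidt sc ip T \<and> c_selfadjoint sc ip T \<and>
             c_hilbert_schmidt sc ip S \<and> c_selfadjoint sc ip S \<and>
             (\<forall>k. ip (T (y k)) (y k) = ip (S (y k)) (y k)) \<longrightarrow> T = S)
      \<longleftrightarrow> c_injective_family sc ip y)))"
proof (rule conjI[OF _ impI], goal_cases)
  case 1
  show ?case
    unfolding r_injective_family_def
    by (rule quadratic_form_injectivity_equivalences[where q = "\<lambda>T v. T v \<bullet> v",
          OF r_hilbert_schmidt_selfadjoint_diff inner_diff_left r_hilbert_schmidt_positive_decomposition])
next
  case 2
  then interpret complex_hilbert_space sc ip by unfold_locales
  show ?case
    unfolding c_injective_family_def
    by (rule quadratic_form_injectivity_equivalences[where q = "\<lambda>T v. ip (T v) v",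
          OF c_hilbert_schmidt_selfadjoint_diff ip_diff_left c_hilbert_schmidt_positive_decomposition])
qed

end
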